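(* (i) For all $a,b\in\overline K$, $\omega_{a,-\infty}=\omega_{b,-\infty}=:\omega_{-\infty}$, and $\omega_{-\infty}\le\omega$ for every $\omega\in\mathbb V(\overline K)$. (ii) For every $a\in\overline K$, $\omega_{a,\infty^-}$ is a maximal element of $\mathbb V(\overline K)$, and the set of maximal elements of $\mathbb V(\overline K)$ is $\{\omega_{\mathcal B}\mid[\mathcal B]\in\mathbb B_\infty\}\sqcup\{\omega_{a,\infty^-}\mid a\in\overline K\}$. (iii) For every $a\in\overline K$, the interval $[\omega_{-\infty},\omega_{a,\infty^-}]$ in $\mathbb V(\overline K)$ equals $\{\omega_{a,\delta}\mid\delta\in\operatorname{Qcuts}(\Gamma)\}$.
   Context: $(K,v)$ valued field, $\overline K$ algebraic closure, $\bar v$ fixed extension of $v$ to $\overline K$, value group $\Gamma$. $\operatorname{Qcuts}(\Gamma)=\Gamma\sqcup\operatorname{Cuts}(\Gamma)$: quasi-cuts $(\delta^L,\delta^R)$ with $\delta^L\le\delta^R$, $\delta^L\cup\delta^R=\Gamma$ ($\gamma\in\Gamma\leftrightarrow(\Gamma_{\le\gamma},\Gamma_{\ge\gamma})$; cuts have $\delta^L<\delta^R$). Improper cuts: $-\infty=(\emptyset,\Gamma)$, $\infty^-=(\Gamma,\emptyset)$. For $\delta\in\Gamma$, $x_\delta=\delta$; for a cut $\delta$, $\Gamma(\delta)=x_\delta\mathbb Z\oplus\Gamma$ ordered with $\delta^L<x_\delta<\delta^R$; $\omega_{a,\delta}(\sum a_n(x-a)^n)=\min_n\{\bar v(a_n)+nx_\delta\}$.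 $\mathbb B_\infty$: classes, under mutual cofinality, of strictly decreasing nests $\mathcal B=(B_i)$ of closed balls $B(a_i,\gamma_i)=\{c:\bar v(c-a_i)\ge\gamma_i\}$, $\gamma_i\in\Gamma$, with empty intersection; $\omega_{\mathcal B}(f)=\max_i\omega_{a_i,\gamma_i}(f)$. $\mathbb V(\overline K)$: equivalence classes of valuations on $\overline K(x)$ extending $\bar v$, where $\mu\sim\nu$ if $\nu=\iota\circ\mu$ for an order isomorphism $\iota$ of value groups; ordered by $\mu\le\nu$ iff for all $f\in\overline K[x]$, $\mu(f)\le\nu(f)$, understood for inequivalent $\mu,\nu$ as the existence of $\gamma\in\Gamma$ with $\mu(f)\le\gamma\le\nu(f)$. *)

theory Defs
  imports "HOL-Computational_Algebra.Polynomial" "HOL-Computational_Algebra.Fraction_Field"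
begin

text \<open>The valuation vbar on an algebraically closed field 'k with values in an ordered
  abelian group 'g; vbar is only meaningful on nonzero elements (vbar 0 = infinity is
  never used).\<close>

definition alg_closed_field :: "'k::field itself \<Rightarrow> bool" where
  "alg_closed_field _ \<longleftrightarrow> (\<forall>p::'k poly. 0 < degree p \<longrightarrow> (\<exists>z. poly p z = 0))"

definition is_valuation :: "('k::field \<Rightarrow> 'g::linordered_ab_group_add) \<Rightarrow> bool" where
  "is_valuation v \<longleftrightarrow>
     (\<forall>c d. c \<noteq> 0 \<longrightarrow> d \<noteq> 0 \<longrightarrow> v (c * d) = v c + v d) \<and>
     (\<forall>c d. c \<noteq> 0 \<longrightarrow> d \<noteq> 0 \<longrightarrow> c + d \<noteq> 0 \<longrightarrow> min (v c) (v d) \<le> v (c + d))"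

definition valgroup :: "('k::field \<Rightarrow> 'g) \<Rightarrow> 'g set" where
  "valgroup v = v ` {c. c \<noteq> 0}"

primrec gmul :: "nat \<Rightarrow> 'g::ab_group_add \<Rightarrow> 'g" where
  "gmul 0 g = 0"
| "gmul (Suc n) g = g + gmul n g"

definition Qcuts :: "'g::linorder set \<Rightarrow> ('g set \<times> 'g set) set" where
  "Qcuts G = {(L, R). L \<union> R = G \<and> (\<forall>l\<in>L. \<forall>r\<in>R. l \<le> r)}"

definition qc_elem :: "'g::linorder set \<Rightarrow> 'g \<Rightarrow> 'g set \<times> 'g set" where
  "qc_elem G \<gamma> = ({x\<in>G. x \<le> \<gamma>}, {x\<in>G. \<gamma> \<le> x})"

definition qc_minf :: "'g set \<Rightarrow> 'g set \<times> 'g set" where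
  "qc_minf G = ({}, G)"

definition qc_inftym :: "'g set \<Rightarrow> 'g set \<times> 'g set" where
  "qc_inftym G = (G, {})"

text \<open>The ordered group Gamma(delta): an element n x_delta + beta is represented by
  (n, beta).  xle delta k beta expresses "k x_delta \<le> beta" (delta^L < x_delta < delta^R
  for a cut; x_delta = delta for delta in Gamma).\<close>
definition xle :: "'g::linordered_ab_group_add set \<times> 'g set \<Rightarrow> int \<Rightarrow> 'g \<Rightarrow> bool" where
  "xle \<delta> k \<beta> =
     (if k = 0 then 0 \<le> \<beta>
      else if 0 < k then (\<exists>r\<in>snd \<delta>. gmul (nat k) r \<le> \<beta>)
      else (\<exists>l\<in>fst \<delta>. - \<beta> \<le> gmul (nat (- k)) l))"

definition qle :: "'g::linordered_ab_group_add set \<times> 'g set \<Rightarrow> nat \<times> 'g \<Rightarrow> nat \<times> 'g \<Rightarrow> bool" where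
  "qle \<delta> s t = xle \<delta> (int (fst s) - int (fst t)) (snd t - snd s)"

definition padd :: "nat \<times> 'g::ab_group_add \<Rightarrow> nat \<times> 'g \<Rightarrow> nat \<times> 'g" where
  "padd s t = (fst s + fst t, snd s + snd t)"

definition tcoeff :: "'k::field \<Rightarrow> 'k poly \<Rightarrow> nat \<Rightarrow> 'k" where
  "tcoeff a f n = coeff (pcompose f [:a, 1:]) n"

definition terms :: "('k::field \<Rightarrow> 'g) \<Rightarrow> 'k \<Rightarrow> 'k poly \<Rightarrow> (nat \<times> 'g) set" where
  "terms v a f = {(n, v (tcoeff a f n)) | n. tcoeff a f n \<noteq> 0}"

definition omega_val :: "('k::field \<Rightarrow> 'g::linordered_ab_group_add) \<Rightarrow> 'k \<Rightarrow> 'g set \<times> 'g set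
    \<Rightarrow> 'k poly \<Rightarrow> nat \<times> 'g" where
  "omega_val v a \<delta> f = (SOME t. t \<in> terms v a f \<and> (\<forall>s\<in>terms v a f. qle \<delta> t s))"

text \<open>An element of V(Kbar) (an equivalence class of valuations mu on Kbar(x) extending vbar)
  is represented by the total preorder  P f g  \<longleftrightarrow>  mu(f) \<le> mu(g)  on Kbar(x)
  (with mu(0) = \<infinity>); two valuations are equivalent iff they induce the same preorder.\<close>

definition omega :: "('k::field \<Rightarrow> 'g::linordered_ab_group_add) \<Rightarrow> 'k \<Rightarrow> 'g set \<times> 'g set
    \<Rightarrow> 'k poly fract \<Rightarrow> 'k poly fract \<Rightarrow> bool" where
  "omega v a \<delta> x y \<longleftrightarrow> y = 0 \<or> (x \<noteq> 0 \<and> (\<exists>f1 g1 f2 g2. g1 \<noteq> 0 \<and> g2 \<noteq> 0 \<and>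
      x = Fract f1 g1 \<and> y = Fract f2 g2 \<and>
      qle \<delta> (padd (omega_val v a \<delta> f1) (omega_val v a \<delta> g2))
             (padd (omega_val v a \<delta> f2) (omega_val v a \<delta> g1))))"

definition cball :: "('k::field \<Rightarrow> 'g::linorder) \<Rightarrow> 'k \<Rightarrow> 'g \<Rightarrow> 'k set" where
  "cball v a \<gamma> = {c. c = a \<or> \<gamma> \<le> v (c - a)}"

text \<open>A strictly decreasing nest of closed balls B(a_i,gamma_i) (gamma_i \<in> Gamma) with empty
  intersection, given as its (self-indexed) set of (centre, radius) pairs.\<close>
definition is_nest :: "('k::field \<Rightarrow> 'g::linordered_ab_group_add) \<Rightarrow> ('k \<times> 'g) set \<Rightarrow> bool" where
  "is_nest v N \<longleftrightarrow> N \<noteq> {} \<and> (\<forall>(a, \<gamma>)\<in>N. \<gamma> \<in> valgroup v) \<and>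
     (\<forall>p\<in>N. \<forall>q\<in>N. p \<noteq> q \<longrightarrow>
        cball v (fst p) (snd p) \<subset> cball v (fst q) (snd q) \<or>
        cball v (fst q) (snd q) \<subset> cball v (fst p) (snd p)) \<and>
     (\<Inter>p\<in>N. cball v (fst p) (snd p)) = {}"

definition wval :: "('k::field \<Rightarrow> 'g::linordered_ab_group_add) \<Rightarrow> 'k \<Rightarrow> 'g \<Rightarrow> 'k poly \<Rightarrow> 'g" where
  "wval v a \<gamma> f = Min {v (tcoeff a f n) + gmul n \<gamma> | n. tcoeff a f n \<noteq> 0}"

definition wnest :: "('k::field \<Rightarrow> 'g::linordered_ab_group_add) \<Rightarrow> ('k \<times> 'g) set \<Rightarrow> 'k poly \<Rightarrow> 'g" where
  "wnest v N f = (GREATEST t. t \<in> {wval v a \<gamma> f | a \<gamma>. (a, \<gamma>) \<in> N})"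

definition omegaB :: "('k::field \<Rightarrow> 'g::linordered_ab_group_add) \<Rightarrow> ('k \<times> 'g) set
    \<Rightarrow> 'k poly fract \<Rightarrow> 'k poly fract \<Rightarrow> bool" where
  "omegaB v N x y \<longleftrightarrow> y = 0 \<or> (x \<noteq> 0 \<and> (\<exists>f1 g1 f2 g2. g1 \<noteq> 0 \<and> g2 \<noteq> 0 \<and>
      x = Fract f1 g1 \<and> y = Fract f2 g2 \<and>
      wnest v N f1 + wnest v N g2 \<le> wnest v N f2 + wnest v N g1))"

definition cst :: "'k::field \<Rightarrow> 'k poly fract" where
  "cst c = Fract [:c:] 1"

definition pfr :: "'k::field poly \<Rightarrow> 'k poly fract" where
  "pfr f = Fract f 1"

text \<open>P is the preorder f \<preceq> g :\<longleftrightarrow> mu(f) \<le> mu(g) of a valuation mu on Kbar(x)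
  extending vbar (value group any ordered abelian group containing Gamma).\<close>
definition is_val_class :: "('k::field \<Rightarrow> 'g::linordered_ab_group_add)
    \<Rightarrow> ('k poly fract \<Rightarrow> 'k poly fract \<Rightarrow> bool) \<Rightarrow> bool" where
  "is_val_class v P \<longleftrightarrow>
     (\<forall>x y. P x y \<or> P y x) \<and>
     (\<forall>x y z. P x y \<longrightarrow> P y z \<longrightarrow> P x z) \<and>
     (\<forall>x. P x 0) \<and> (\<forall>x. P 0 x \<longrightarrow> x = 0) \<and>
     (\<forall>x y z. P x y \<longrightarrow> P (x * z) (y * z)) \<and>
     (\<forall>x y z. P x y \<longrightarrow> P x z \<longrightarrow> P x (y + z)) \<and>
     (\<forall>c d. c \<noteq> 0 \<longrightarrow> d \<noteq> 0 \<longrightarrow> (P (cst c) (cst d) \<longleftrightarrow> v c \<le> v d))"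

definition vle :: "('k::field \<Rightarrow> 'g::linordered_ab_group_add)
    \<Rightarrow> ('k poly fract \<Rightarrow> 'k poly fract \<Rightarrow> bool) \<Rightarrow> ('k poly fract \<Rightarrow> 'k poly fract \<Rightarrow> bool) \<Rightarrow> bool" where
  "vle v P Q \<longleftrightarrow> P = Q \<or>
     (\<forall>f::'k poly. f \<noteq> 0 \<longrightarrow> (\<exists>c. c \<noteq> 0 \<and> P (pfr f) (cst c) \<and> Q (cst c) (pfr f)))"

definition is_maximal :: "('k::field \<Rightarrow> 'g::linordered_ab_group_add)
    \<Rightarrow> ('k poly fract \<Rightarrow> 'k poly fract \<Rightarrow> bool) \<Rightarrow> bool" where
  "is_maximal v P \<longleftrightarrow> is_val_class v P \<and> (\<forall>Q. is_val_class v Q \<longrightarrow> vle v P Q \<longrightarrow> Q = P)"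

end

theory Submission
  imports Defs
begin

text \<open>Every polynomial splits into linear factors, so a valuation class Q on Kbar(x) is
  determined by how the x - r compare with the constants.  If Q has a centre a, i.e.
  Q(x - r) = min(Q(x - a), v(r - a)) for all r, then Q = omega_{a,delta} for the quasi-cut delta
  cut out by Q(x - a) in Gamma; here Gamma is divisible, which makes Gamma(delta) totally
  ordered.  This gives (i) and (iii): omega_{a,-\<infinity>} puts every x - r below all constants,
  and a class below omega_{a,\<infinity>-} has centre a.  For (ii), a maximal Q either has some
  Q(x - b) above all constants, and then Q = omega_{b,\<infinity>-}, or every Q(x - b) is a value
  of Gamma and these values have no maximum; then the balls B(b, Q(x - b)) form a nest with
  empty intersection, and Q = omega_B.\<close>

section \<open>Valuations on an algebraically closed field\<close>

lemma gmul_add_left: "gmul (m + n) g = gmul m g + gmul n g"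
  by (induction m) (auto simp: add.assoc)

lemma gmul_mono: "(a::'g::linordered_ab_group_add) \<le> b \<Longrightarrow> gmul n a \<le> gmul n b"
  by (induction n) (auto intro: add_mono)

locale valued_field =
  fixes v :: "'k::field \<Rightarrow> 'g::linordered_ab_group_add"
  assumes valuation: "is_valuation v"
begin

abbreviation \<Gamma> :: "'g set" where "\<Gamma> \<equiv> valgroup v"

lemma v_mult: "c \<noteq> 0 \<Longrightarrow> d \<noteq> 0 \<Longrightarrow> v (c * d) = v c + v d"
  using valuation unfolding is_valuation_def by blast

lemma v_ultra: "c \<noteq> 0 \<Longrightarrow> d \<noteq> 0 \<Longrightarrow> c + d \<noteq> 0 \<Longrightarrow> min (v c) (v d) \<le> v (c + d)"
  using valuation unfolding is_valuation_def by blast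

lemma v_ultra_bound: "c \<noteq> 0 \<Longrightarrow> d \<noteq> 0 \<Longrightarrow> c + d \<noteq> 0 \<Longrightarrow> \<gamma> \<le> v c \<Longrightarrow> \<gamma> \<le> v d \<Longrightarrow> \<gamma> \<le> v (c + d)"
  using v_ultra[of c d] by (metis min.bounded_iff order_trans)

lemma v_one [simp]: "v 1 = 0"
  using v_mult[of 1 1] by simp

lemma v_minus_one: "v (-1) = 0"
proof -
  have "v (-1) + v (-1) = 0"
    using v_mult[of "-1" "-1"] by simp
  then show ?thesis
    by (metis add.inverse_unique add_less_same_cancel1 add_pos_pos
        less_eq_neg_nonpos linorder_not_le neg_less_0_iff_less not_less_iff_gr_or_eq)
qed

lemma v_uminus [simp]: "v (- c) = v c"
proof (cases "c = 0")
  case False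
  then show ?thesis using v_mult[of "-1" c] v_minus_one by simp
qed simp

lemma v_diff_commute: "v (c - d) = v (d - c)"
  by (metis minus_diff_eq v_uminus)

lemma v_inverse: "c \<noteq> 0 \<Longrightarrow> v (inverse c) = - v c"
  using v_mult[of c "inverse c"] by (simp add: eq_neg_iff_add_eq_0 add.commute)

lemma v_divide: "c \<noteq> 0 \<Longrightarrow> d \<noteq> 0 \<Longrightarrow> v (c / d) = v c - v d"
  by (simp add: divide_inverse v_mult v_inverse)

lemma v_power: "c \<noteq> 0 \<Longrightarrow> v (c ^ n) = gmul n (v c)"
  by (induction n) (auto simp: v_mult)

lemma v_add_eq_left:
  assumes "c \<noteq> 0" "d \<noteq> 0" "v c < v d"
  shows "c + d \<noteq> 0" "v (c + d) = v c"
proof -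
  show cd: "c + d \<noteq> 0"
    using assms by (metis add_eq_0_iff v_uminus less_irrefl)
  have "min (v (c + d)) (v (-d)) \<le> v ((c + d) + (-d))"
    using v_ultra[of "c + d" "-d"] cd assms by simp
  then have "v (c + d) \<le> v c"
    using assms by (auto simp: min_def split: if_splits)
  moreover have "v c \<le> v (c + d)"
    using v_ultra[of c d] cd assms by auto
  ultimately show "v (c + d) = v c" by simp
qed

lemma v_add_eq_right: "c \<noteq> 0 \<Longrightarrow> d \<noteq> 0 \<Longrightarrow> v d < v c \<Longrightarrow> v (c + d) = v d"
  using v_add_eq_left(2)[of d c] by (simp add: add.commute)

lemma valgroup_zero: "0 \<in> \<Gamma>"
  unfolding valgroup_def by (rule image_eqI[of _ _ 1]) auto

lemma valgroupI: "c \<noteq> 0 \<Longrightarrow> v c \<in> \<Gamma>"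
  unfolding valgroup_def by auto

lemma valgroupE: "\<gamma> \<in> \<Gamma> \<Longrightarrow> (\<And>c. c \<noteq> 0 \<Longrightarrow> \<gamma> = v c \<Longrightarrow> P) \<Longrightarrow> P"
  unfolding valgroup_def by auto

lemma valgroup_add: "a \<in> \<Gamma> \<Longrightarrow> b \<in> \<Gamma> \<Longrightarrow> a + b \<in> \<Gamma>"
  by (metis valgroupE valgroupI v_mult mult_eq_0_iff)

lemma valgroup_uminus: "a \<in> \<Gamma> \<Longrightarrow> - a \<in> \<Gamma>"
  by (metis valgroupE valgroupI v_inverse inverse_nonzero_iff_nonzero)

lemma valgroup_diff: "a \<in> \<Gamma> \<Longrightarrow> b \<in> \<Gamma> \<Longrightarrow> a - b \<in> \<Gamma>"
  by (metis valgroup_add valgroup_uminus diff_conv_add_uminus)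

lemma valgroup_gmul: "a \<in> \<Gamma> \<Longrightarrow> gmul n a \<in> \<Gamma>"
  by (induction n) (auto simp: valgroup_zero valgroup_add)

end

locale alg_closed_valued_field = valued_field v for v :: "'k::field \<Rightarrow> 'g::linordered_ab_group_add" +
  assumes alg_closed: "alg_closed_field TYPE('k)"
begin

lemma poly_root_exists: "0 < degree (p::'k poly) \<Longrightarrow> \<exists>z. poly p z = 0"
  using alg_closed unfolding alg_closed_field_def by blast

lemma nth_root_exists:
  fixes c :: 'k
  assumes "c \<noteq> 0" "n > 0"
  shows "\<exists>z. z \<noteq> 0 \<and> z ^ n = c"
proof -
  let ?p = "monom 1 n + [:-c:]"
  have "degree ?p = n"
    using assms by (subst degree_add_eq_left) (auto simp: degree_monom_eq)
  then obtain z where "poly ?p z = 0"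
    using poly_root_exists[of ?p] assms by auto
  then have "z ^ n = c" by (simp add: poly_monom)
  then show ?thesis using assms by auto
qed

lemma valgroup_divisible:
  assumes "\<beta> \<in> \<Gamma>" "n > 0"
  shows "\<exists>q\<in>\<Gamma>. gmul n q = \<beta>"
proof -
  obtain c where c: "c \<noteq> 0" "\<beta> = v c"
    using assms valgroupE by blast
  obtain z where "z \<noteq> 0" "z ^ n = c"
    using nth_root_exists c assms by blast
  then show ?thesis using c v_power[of z n] valgroupI by auto
qed

lemma poly_linear_factor_induct [consumes 1, case_names const linear mult]:
  fixes P :: "'k poly \<Rightarrow> bool"
  assumes "p \<noteq> 0"
    and const: "\<And>c. c \<noteq> 0 \<Longrightarrow> P [:c:]"
    and linear: "\<And>r. P [:-r, 1:]"
    and mult: "\<And>p q. p \<noteq> 0 \<Longrightarrow> q \<noteq> 0 \<Longrightarrow> P p \<Longrightarrow> P q \<Longrightarrow> P (p * q)"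
  shows "P p"
  using \<open>p \<noteq> 0\<close>
proof (induction "degree p" arbitrary: p rule: less_induct)
  case less
  show ?case
  proof (cases "degree p = 0")
    case True
    then obtain c where "p = [:c:]" by (meson degree_eq_zeroE)
    then show ?thesis using less const by auto
  next
    case False
    then obtain z where "poly p z = 0"
      using poly_root_exists by auto
    then obtain q where q: "p = [:-z, 1:] * q"
      using poly_eq_0_iff_dvd by (metis dvdE)
    have "q \<noteq> 0" using q less by auto
    have "degree p = 1 + degree q"
      unfolding q using \<open>q \<noteq> 0\<close> by (subst degree_mult_eq) auto
    then have "P q" using less \<open>q \<noteq> 0\<close> by auto
    then show ?thesis
      using mult[OF _ \<open>q \<noteq> 0\<close> linear[of z]] \<open>q \<noteq> 0\<close> unfolding q by simp
  qed
qed

end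

section \<open>Quasi-cuts and the ordered groups Gamma(delta)\<close>

lemma Qcuts_le: "\<delta> \<in> Qcuts G \<Longrightarrow> l \<in> fst \<delta> \<Longrightarrow> r \<in> snd \<delta> \<Longrightarrow> l \<le> r"
  unfolding Qcuts_def by auto

lemma Qcuts_Un: "\<delta> \<in> Qcuts G \<Longrightarrow> fst \<delta> \<union> snd \<delta> = G"
  unfolding Qcuts_def by auto

lemma qc_minf_Qcuts: "qc_minf G \<in> Qcuts G"
  unfolding qc_minf_def Qcuts_def by auto

lemma qc_inftym_Qcuts: "qc_inftym G \<in> Qcuts G"
  unfolding qc_inftym_def Qcuts_def by auto

lemma qc_elem_Qcuts: "\<gamma> \<in> G \<Longrightarrow> qc_elem G \<gamma> \<in> Qcuts G"
  unfolding qc_elem_def Qcuts_def by auto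

lemma xle_pos: "k > 0 \<Longrightarrow> xle \<delta> k \<beta> \<longleftrightarrow> (\<exists>r\<in>snd \<delta>. gmul (nat k) r \<le> \<beta>)"
  unfolding xle_def by auto

lemma xle_neg: "k < 0 \<Longrightarrow> xle \<delta> k \<beta> \<longleftrightarrow> (\<exists>l\<in>fst \<delta>. - \<beta> \<le> gmul (nat (- k)) l)"
  unfolding xle_def by auto

lemma xle_zero: "xle \<delta> 0 \<beta> \<longleftrightarrow> 0 \<le> \<beta>"
  unfolding xle_def by auto

lemma xle_mono: "xle \<delta> k \<beta> \<Longrightarrow> \<beta> \<le> \<beta>' \<Longrightarrow> xle \<delta> k \<beta>'"
  unfolding xle_def by (auto split: if_splits intro: order_trans) (meson neg_le_iff_le order_trans)

lemma xle_add_pos_pos: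
  assumes "xle \<delta> (int a) \<beta>" "xle \<delta> (int b) \<gamma>" "a > 0" "b > 0"
  shows "xle \<delta> (int (a + b)) (\<beta> + \<gamma>)"
proof -
  obtain r r' where r: "r \<in> snd \<delta>" "gmul a r \<le> \<beta>" and r': "r' \<in> snd \<delta>" "gmul b r' \<le> \<gamma>"
    using assms by (auto simp: xle_pos)
  have "gmul a (min r r') \<le> \<beta>" "gmul b (min r r') \<le> \<gamma>"
    using r r' gmul_mono[of "min r r'" r a] gmul_mono[of "min r r'" r' b] by auto
  then have "gmul (a + b) (min r r') \<le> \<beta> + \<gamma>"
    unfolding gmul_add_left by (rule add_mono)
  moreover have "min r r' \<in> snd \<delta>"
    using r r' by (simp add: min_def)
  ultimately show ?thesis
    using assms(3) xle_pos[of "int (a + b)" \<delta> "\<beta> + \<gamma>"] by (auto simp del: of_nat_add)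
qed

lemma xle_add_neg_neg:
  assumes "xle \<delta> (- int a) \<beta>" "xle \<delta> (- int b) \<gamma>" "a > 0" "b > 0"
  shows "xle \<delta> (- int (a + b)) (\<beta> + \<gamma>)"
proof -
  obtain l l' where l: "l \<in> fst \<delta>" "- \<beta> \<le> gmul a l" and l': "l' \<in> fst \<delta>" "- \<gamma> \<le> gmul b l'"
    using assms by (auto simp: xle_neg)
  have "- \<beta> \<le> gmul a (max l l')" "- \<gamma> \<le> gmul b (max l l')"
    using l l' gmul_mono[of l "max l l'" a] gmul_mono[of l' "max l l'" b] by auto
  then have "- (\<beta> + \<gamma>) \<le> gmul (a + b) (max l l')"
    unfolding gmul_add_left minus_add_distrib by (rule add_mono)
  moreover have "max l l' \<in> fst \<delta>"
    using l l' by (simp add: max_def)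
  ultimately show ?thesis
    using assms(3) xle_neg[of "- int (a + b)" \<delta> "\<beta> + \<gamma>"] by (auto simp del: of_nat_add)
qed

lemma xle_add_pos_neg:
  assumes "\<delta> \<in> Qcuts G" "xle \<delta> (int a) \<beta>" "xle \<delta> (- int b) \<gamma>" "a > 0" "b > 0"
  shows "xle \<delta> (int a - int b) (\<beta> + \<gamma>)"
proof -
  obtain r l where rl: "r \<in> snd \<delta>" "gmul a r \<le> \<beta>" "l \<in> fst \<delta>" "- \<gamma> \<le> gmul b l"
    using assms by (auto simp: xle_pos xle_neg)
  have lr: "l \<le> r" using Qcuts_le[OF assms(1) rl(3,1)] .
  have "- gmul b l \<le> \<gamma>" using rl(4) by (simp add: minus_le_iff)
  then have key: "gmul a r - gmul b l \<le> \<beta> + \<gamma>"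
    using add_mono[OF rl(2)] by (simp only: diff_conv_add_uminus)
  consider "a > b" | "a < b" | "a = b" by linarith
  then show ?thesis
  proof cases
    case 1
    then obtain c where c: "a = c + b" "c > 0" by (metis add.commute less_imp_add_positive)
    have "gmul c r = gmul a r - gmul b r" using c by (simp add: gmul_add_left)
    also have "\<dots> \<le> gmul a r - gmul b l" using gmul_mono[OF lr] by simp
    finally have "gmul c r \<le> \<beta> + \<gamma>" using key by simp
    then show ?thesis using c rl by (subst xle_pos) auto
  next
    case 2
    then obtain c where c: "b = c + a" "c > 0" by (metis add.commute less_imp_add_positive)
    have "- (\<beta> + \<gamma>) \<le> gmul b l - gmul a r" using key by (simp add: algebra_simps)
    also have "\<dots> \<le> gmul b l - gmul a l" using gmul_mono[OF lr] by simp
    also have "\<dots> = gmul c l" using c by (simp add: gmul_add_left)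
    finally show ?thesis using c rl by (subst xle_neg) auto
  next
    case 3
    then have "0 \<le> \<beta> + \<gamma>"
      using key gmul_mono[OF lr, of a] by (metis diff_ge_0_iff_ge order_trans)
    then show ?thesis using 3 by (simp add: xle_zero)
  qed
qed

lemma xle_add:
  assumes "\<delta> \<in> Qcuts G" "xle \<delta> k \<beta>" "xle \<delta> m \<gamma>"
  shows "xle \<delta> (k + m) (\<beta> + \<gamma>)"
proof -
  have zero: "xle \<delta> m (\<beta> + \<gamma>)" if "xle \<delta> 0 \<beta>" "xle \<delta> m \<gamma>" for \<beta> \<gamma> m
    using that by (auto simp: xle_zero intro: xle_mono)
  consider "k = 0" | "m = 0" | "k > 0" "m > 0" | "k > 0" "m < 0" | "k < 0" "m > 0" | "k < 0" "m < 0"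
    by linarith
  then show ?thesis
  proof cases
    case 1
    then show ?thesis using zero assms by simp
  next
    case 2
    then show ?thesis using zero[of \<gamma> k \<beta>] assms by (simp add: add.commute)
  next
    case 3
    then obtain a b where "k = int a" "m = int b" "a > 0" "b > 0" by (metis pos_int_cases)
    then show ?thesis using xle_add_pos_pos assms by simp
  next
    case 4
    then obtain a b where "k = int a" "m = - int b" "a > 0" "b > 0"
      by (metis pos_int_cases neg_int_cases)
    then show ?thesis using xle_add_pos_neg[of \<delta> G a \<beta> b \<gamma>] assms by simp
  next
    case 5
    then obtain a b where "k = - int a" "m = int b" "a > 0" "b > 0"
      by (metis pos_int_cases neg_int_cases)
    then show ?thesis using xle_add_pos_neg[of \<delta> G b \<gamma> a \<beta>] assms by (simp add: add.commute)
  next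
    case 6
    then obtain a b where "k = - int a" "m = - int b" "a > 0" "b > 0" by (metis neg_int_cases)
    then show ?thesis using xle_add_neg_neg assms by (simp add: algebra_simps)
  qed
qed

lemma qle_refl: "qle \<delta> s s"
  unfolding qle_def by (simp add: xle_zero)

lemma qle_trans: "\<delta> \<in> Qcuts G \<Longrightarrow> qle \<delta> s t \<Longrightarrow> qle \<delta> t u \<Longrightarrow> qle \<delta> s u"
  unfolding qle_def using xle_add by fastforce

lemma qle_padd_right: "qle \<delta> (padd s u) (padd t u) \<longleftrightarrow> qle \<delta> s t"
  unfolding qle_def padd_def by (simp add: algebra_simps)

lemma qle_padd_left: "qle \<delta> (padd u s) (padd u t) \<longleftrightarrow> qle \<delta> s t"
  unfolding qle_def padd_def by (simp add: algebra_simps)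

lemma qle_same_fst: "fst s = fst t \<Longrightarrow> qle \<delta> s t \<longleftrightarrow> snd s \<le> snd t"
  unfolding qle_def by (simp add: xle_zero)

lemma padd_commute: "padd s t = padd t s"
  unfolding padd_def by (simp add: add.commute)

lemma padd_assoc: "padd (padd s t) u = padd s (padd t u)"
  unfolding padd_def by (simp add: add.assoc)

lemma qle_padd_mono: "\<delta> \<in> Qcuts G \<Longrightarrow> qle \<delta> s t \<Longrightarrow> qle \<delta> s' t' \<Longrightarrow> qle \<delta> (padd s s') (padd t t')"
  by (meson qle_padd_right qle_padd_left qle_trans)

definition qlt :: "'g::linordered_ab_group_add set \<times> 'g set \<Rightarrow> nat \<times> 'g \<Rightarrow> nat \<times> 'g \<Rightarrow> bool" where
  "qlt \<delta> s t \<longleftrightarrow> \<not> qle \<delta> t s"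

definition qeq :: "'g::linordered_ab_group_add set \<times> 'g set \<Rightarrow> nat \<times> 'g \<Rightarrow> nat \<times> 'g \<Rightarrow> bool" where
  "qeq \<delta> s t \<longleftrightarrow> qle \<delta> s t \<and> qle \<delta> t s"

lemma qlt_padd_mono:
  assumes "\<delta> \<in> Qcuts G" "qlt \<delta> s t" "qle \<delta> s' t'"
  shows "qlt \<delta> (padd s s') (padd t t')"
  using assms qle_padd_left[of \<delta> t s' t'] qle_padd_right[of \<delta> t s' s] qle_trans[OF assms(1)]
  unfolding qlt_def by blast

lemma qeq_refl: "qeq \<delta> s s"
  unfolding qeq_def by (simp add: qle_refl)

lemma qeq_sym: "qeq \<delta> s t \<Longrightarrow> qeq \<delta> t s"
  unfolding qeq_def by blast

lemma qeq_trans: "\<delta> \<in> Qcuts G \<Longrightarrow> qeq \<delta> s t \<Longrightarrow> qeq \<delta> t u \<Longrightarrow> qeq \<delta> s u"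
  unfolding qeq_def using qle_trans by blast

lemma qeq_padd: "\<delta> \<in> Qcuts G \<Longrightarrow> qeq \<delta> s t \<Longrightarrow> qeq \<delta> s' t' \<Longrightarrow> qeq \<delta> (padd s s') (padd t t')"
  unfolding qeq_def using qle_padd_mono by blast

lemma qle_cong: "\<delta> \<in> Qcuts G \<Longrightarrow> qeq \<delta> s s' \<Longrightarrow> qeq \<delta> t t' \<Longrightarrow> qle \<delta> s t \<longleftrightarrow> qle \<delta> s' t'"
  unfolding qeq_def using qle_trans by blast

context alg_closed_valued_field
begin

lemma xle_total:
  assumes "\<delta> \<in> Qcuts \<Gamma>" "\<beta> \<in> \<Gamma>"
  shows "xle \<delta> k \<beta> \<or> xle \<delta> (- k) (- \<beta>)"
proof -
  consider "k = 0" | "k > 0" | "k < 0" by linarith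
  then show ?thesis
  proof cases
    case 1
    then show ?thesis by (auto simp: xle_zero)
  next
    case 2
    then obtain a where a: "k = int a" "a > 0" by (metis pos_int_cases)
    obtain q where q: "q \<in> \<Gamma>" "gmul a q = \<beta>"
      using valgroup_divisible assms a by blast
    then have "q \<in> fst \<delta> \<or> q \<in> snd \<delta>"
      using Qcuts_Un[OF assms(1)] by auto
    then show ?thesis using a q by (auto simp: xle_pos xle_neg)
  next
    case 3
    then obtain a where a: "k = - int a" "a > 0" by (metis neg_int_cases)
    obtain q where q: "q \<in> \<Gamma>" "gmul a q = - \<beta>"
      using valgroup_divisible valgroup_uminus assms a by blast
    then have "q \<in> fst \<delta> \<or> q \<in> snd \<delta>"
      using Qcuts_Un[OF assms(1)] by auto
    then show ?thesis using a q by (auto simp: xle_pos xle_neg intro!: bexI[of _ q])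
  qed
qed

lemma qle_total: "\<delta> \<in> Qcuts \<Gamma> \<Longrightarrow> snd s \<in> \<Gamma> \<Longrightarrow> snd t \<in> \<Gamma> \<Longrightarrow> qle \<delta> s t \<or> qle \<delta> t s"
  unfolding qle_def using xle_total[of \<delta> "snd t - snd s" "int (fst s) - int (fst t)"] valgroup_diff
  by (auto simp: algebra_simps)

end

section \<open>Minimal terms of polynomials\<close>

context valued_field
begin

definition coeff_vals :: "'k poly \<Rightarrow> (nat \<times> 'g) set" where
  "coeff_vals p = {(n, v (coeff p n)) | n. coeff p n \<noteq> 0}"

lemma terms_eq_coeff_vals: "terms v a f = coeff_vals (pcompose f [:a, 1:])"
  unfolding terms_def coeff_vals_def tcoeff_def by simp

lemma coeff_vals_finite: "finite (coeff_vals p)"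
proof -
  have "coeff_vals p \<subseteq> (\<lambda>n. (n, v (coeff p n))) ` {..degree p}"
    unfolding coeff_vals_def using le_degree by auto
  then show ?thesis using finite_subset by blast
qed

lemma coeff_vals_nonempty: "p \<noteq> 0 \<Longrightarrow> coeff_vals p \<noteq> {}"
  unfolding coeff_vals_def using leading_coeff_neq_0 by blast

lemma coeff_vals_valgroup: "s \<in> coeff_vals p \<Longrightarrow> snd s \<in> \<Gamma>"
  unfolding coeff_vals_def using valgroupI by auto

lemma coeff_valsI: "coeff p n \<noteq> 0 \<Longrightarrow> (n, v (coeff p n)) \<in> coeff_vals p"
  unfolding coeff_vals_def by auto

lemma coeff_vals_const:
  assumes "c \<noteq> 0"
  shows "coeff_vals [:c:] = {(0, v c)}"
proof -
  have "coeff [:c:] n \<noteq> 0 \<longleftrightarrow> n = 0" for n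
    using assms by (cases n) auto
  then show ?thesis unfolding coeff_vals_def by auto
qed

lemma coeff_vals_linear: "coeff_vals [:a - r, 1:] = {(1, 0)} \<union> (if a = r then {} else {(0, v (a - r))})"
proof -
  have "coeff [:a - r, 1:] n = (if n = 0 then a - r else if n = 1 then 1 else 0)" for n
    by (cases n) (auto simp: coeff_pCons split: nat.splits)
  then show ?thesis unfolding coeff_vals_def by (auto split: if_splits)
qed

lemma v_sum_ge:
  "finite I \<Longrightarrow> (\<Sum>i\<in>I. x i) \<noteq> 0 \<Longrightarrow> (\<forall>i\<in>I. x i \<noteq> 0 \<longrightarrow> \<gamma> \<le> v (x i)) \<Longrightarrow> \<gamma> \<le> v (\<Sum>i\<in>I. x i)"
proof (induction I rule: finite_induct)
  case (insert j I)
  then show ?case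
    using v_ultra_bound[of "x j" "\<Sum>i\<in>I. x i" \<gamma>] by (cases "x j = 0"; cases "(\<Sum>i\<in>I. x i) = 0") auto
qed simp

lemma v_sum_gt:
  "finite I \<Longrightarrow> (\<Sum>i\<in>I. x i) \<noteq> 0 \<Longrightarrow> (\<forall>i\<in>I. x i \<noteq> 0 \<longrightarrow> \<gamma> < v (x i)) \<Longrightarrow> \<gamma> < v (\<Sum>i\<in>I. x i)"
proof (induction I rule: finite_induct)
  case (insert j I)
  then show ?case
    using v_ultra[of "x j" "\<Sum>i\<in>I. x i"]
    by (cases "x j = 0"; cases "(\<Sum>i\<in>I. x i) = 0") (auto simp: min_def split: if_splits)
qed simp

lemma v_sum_dominant:
  assumes "finite I" "j \<in> I" "x j \<noteq> 0" "\<forall>i\<in>I - {j}. x i \<noteq> 0 \<longrightarrow> v (x j) < v (x i)"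
  shows "(\<Sum>i\<in>I. x i) \<noteq> 0" "v (\<Sum>i\<in>I. x i) = v (x j)"
proof -
  have s: "(\<Sum>i\<in>I. x i) = x j + (\<Sum>i\<in>I - {j}. x i)"
    using assms by (simp add: sum.remove)
  have "(\<Sum>i\<in>I. x i) \<noteq> 0 \<and> v (\<Sum>i\<in>I. x i) = v (x j)"
  proof (cases "(\<Sum>i\<in>I - {j}. x i) = 0")
    case True
    then show ?thesis using s assms by simp
  next
    case False
    have "v (x j) < v (\<Sum>i\<in>I - {j}. x i)"
      using v_sum_gt[of "I - {j}" x] False assms by auto
    then show ?thesis using v_add_eq_left[OF assms(3) False] s by simp
  qed
  then show "(\<Sum>i\<in>I. x i) \<noteq> 0" "v (\<Sum>i\<in>I. x i) = v (x j)" by auto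
qed

lemma coeff_vals_mult_lower_bound:
  assumes d: "\<delta> \<in> Qcuts G"
    and tp: "\<forall>s\<in>coeff_vals p. qle \<delta> tp s" and tq: "\<forall>s\<in>coeff_vals q. qle \<delta> tq s"
    and s: "s \<in> coeff_vals (p * q)"
  shows "qle \<delta> (padd tp tq) s"
proof -
  obtain n where n: "s = (n, v (coeff (p * q) n))" "coeff (p * q) n \<noteq> 0"
    using s unfolding coeff_vals_def by blast
  define y where "y i = coeff p i * coeff q (n - i)" for i
  have cn: "coeff (p * q) n = (\<Sum>i\<le>n. y i)"
    unfolding coeff_mult y_def ..
  let ?S = "{v (y i) | i. i \<le> n \<and> y i \<noteq> 0}"
  have "?S \<noteq> {}"
    using n(2) unfolding cn by (auto intro: sum.neutral)
  then obtain i where i: "i \<le> n" "y i \<noteq> 0" "Min ?S = v (y i)"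
    using Min_in[of ?S] by auto
  have "\<forall>j\<in>{..n}. y j \<noteq> 0 \<longrightarrow> v (y i) \<le> v (y j)"
    using i(3) Min_le[of ?S] by auto
  then have "v (y i) \<le> v (coeff (p * q) n)"
    using v_sum_ge[of "{..n}" y "v (y i)"] n(2) unfolding cn by blast
  then have "qle \<delta> (n, v (y i)) s"
    using n by (simp add: qle_same_fst)
  moreover have "qle \<delta> (padd tp tq) (n, v (y i))"
  proof -
    have ai: "coeff p i \<noteq> 0" and bi: "coeff q (n - i) \<noteq> 0"
      using i unfolding y_def by auto
    have "qle \<delta> (padd tp tq) (padd (i, v (coeff p i)) (n - i, v (coeff q (n - i))))"
      using qle_padd_mono[OF d] tp tq coeff_valsI[OF ai] coeff_valsI[OF bi] by blast
    then show ?thesis using i ai bi unfolding padd_def y_def by (simp add: v_mult)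
  qed
  ultimately show ?thesis using qle_trans[OF d] by blast
qed

lemma coeff_vals_add_lower_bound:
  assumes d: "\<delta> \<in> Qcuts G"
    and tp: "\<forall>s\<in>coeff_vals p. qle \<delta> tp s" and tq: "\<forall>s\<in>coeff_vals q. qle \<delta> tq s"
    and s: "s \<in> coeff_vals (p + q)"
  shows "qle \<delta> tp s \<or> qle \<delta> tq s"
proof -
  obtain n where n: "s = (n, v (coeff p n + coeff q n))" "coeff p n + coeff q n \<noteq> 0"
    using s unfolding coeff_vals_def by auto
  show ?thesis
  proof (cases "coeff p n = 0 \<or> coeff q n = 0")
    case True
    then show ?thesis using n tp tq coeff_valsI[of p n] coeff_valsI[of q n] by auto
  next
    case False
    then have "v (coeff p n) \<le> snd s \<or> v (coeff q n) \<le> snd s"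
      using v_ultra[of "coeff p n" "coeff q n"] n by (auto simp: min_def split: if_splits)
    then have "qle \<delta> (n, v (coeff p n)) s \<or> qle \<delta> (n, v (coeff q n)) s"
      using n by (auto simp: qle_same_fst)
    then show ?thesis
      using False tp tq coeff_valsI[of p n] coeff_valsI[of q n] qle_trans[OF d] by blast
  qed
qed

end

context alg_closed_valued_field
begin

lemma qle_min_exists:
  assumes "\<delta> \<in> Qcuts \<Gamma>" "finite S" "S \<noteq> {}" "\<forall>s\<in>S. snd s \<in> \<Gamma>"
  shows "\<exists>t\<in>S. \<forall>s\<in>S. qle \<delta> t s"
  using assms(2,3,4)
proof (induction S rule: finite_ne_induct)
  case (singleton x)
  then show ?case using qle_refl[of \<delta> x] by auto
next
  case (insert x F)
  then obtain t where t: "t \<in> F" "\<forall>s\<in>F. qle \<delta> t s" by auto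
  then have "qle \<delta> t x \<or> qle \<delta> x t"
    using qle_total[OF assms(1)] insert by auto
  then show ?case
    using t qle_trans[OF assms(1)] qle_refl by blast
qed

lemma coeff_vals_least_index_min:
  assumes "\<delta> \<in> Qcuts \<Gamma>" "p \<noteq> 0"
  obtains i where "coeff p i \<noteq> 0" "\<forall>s\<in>coeff_vals p. qle \<delta> (i, v (coeff p i)) s"
    "\<forall>j<i. coeff p j \<noteq> 0 \<longrightarrow> qlt \<delta> (i, v (coeff p i)) (j, v (coeff p j))"
proof -
  let ?P = "\<lambda>i. coeff p i \<noteq> 0 \<and> (\<forall>s\<in>coeff_vals p. qle \<delta> (i, v (coeff p i)) s)"
  obtain t where "t \<in> coeff_vals p" "\<forall>s\<in>coeff_vals p. qle \<delta> t s"
    using qle_min_exists[OF assms(1) coeff_vals_finite coeff_vals_nonempty[OF assms(2)]]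
      coeff_vals_valgroup by blast
  then have "\<exists>i. ?P i" unfolding coeff_vals_def by auto
  then have P: "?P (LEAST i. ?P i)" by (rule LeastI_ex)
  moreover have "qlt \<delta> ((LEAST i. ?P i), v (coeff p (LEAST i. ?P i))) (j, v (coeff p j))"
    if "j < (LEAST i. ?P i)" "coeff p j \<noteq> 0" for j
    using that P qle_trans[OF assms(1)] not_less_Least[OF that(1)] unfolding qlt_def by blast
  ultimately show ?thesis using that by blast
qed

lemma coeff_vals_mult_attained:
  assumes d: "\<delta> \<in> Qcuts \<Gamma>" and p: "p \<noteq> 0" and q: "q \<noteq> 0"
  obtains i j where "coeff p i \<noteq> 0" "\<forall>s\<in>coeff_vals p. qle \<delta> (i, v (coeff p i)) s"
    "coeff q j \<noteq> 0" "\<forall>s\<in>coeff_vals q. qle \<delta> (j, v (coeff q j)) s"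
    "padd (i, v (coeff p i)) (j, v (coeff q j)) \<in> coeff_vals (p * q)"
proof -
  obtain i0 where i0: "coeff p i0 \<noteq> 0" "\<forall>s\<in>coeff_vals p. qle \<delta> (i0, v (coeff p i0)) s"
    "\<forall>j<i0. coeff p j \<noteq> 0 \<longrightarrow> qlt \<delta> (i0, v (coeff p i0)) (j, v (coeff p j))"
    using coeff_vals_least_index_min[OF d p] by blast
  obtain j0 where j0: "coeff q j0 \<noteq> 0" "\<forall>s\<in>coeff_vals q. qle \<delta> (j0, v (coeff q j0)) s"
    "\<forall>j<j0. coeff q j \<noteq> 0 \<longrightarrow> qlt \<delta> (j0, v (coeff q j0)) (j, v (coeff q j))"
    using coeff_vals_least_index_min[OF d q] by blast
  let ?a = "coeff p" and ?b = "coeff q"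
  define n0 where "n0 = i0 + j0"
  define x where "x i = ?a i * ?b (n0 - i)" for i
  \<comment> \<open>among the products contributing to the coefficient of degree i0 + j0, the product of the
      two least-index minimal terms is the only one of minimal value\<close>
  have strict: "v (x i0) < v (x i)" if "i \<le> n0" "i \<noteq> i0" "x i \<noteq> 0" for i
  proof -
    have ai: "?a i \<noteq> 0" and bi: "?b (n0 - i) \<noteq> 0"
      using that(3) unfolding x_def by auto
    have "qlt \<delta> (padd (i0, v (?a i0)) (j0, v (?b j0))) (padd (i, v (?a i)) (n0 - i, v (?b (n0 - i))))"
    proof (cases "i < i0")
      case True
      then show ?thesis
        using qlt_padd_mono[OF d] i0(3) ai j0(2) coeff_valsI[OF bi] by blast
    next
      case False
      then have "n0 - i < j0" using that unfolding n0_def by auto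
      then show ?thesis
        using qlt_padd_mono[OF d] j0(3) bi i0(2) coeff_valsI[OF ai] by (metis padd_commute)
    qed
    moreover have "i + (n0 - i) = i0 + j0" using that unfolding n0_def by auto
    ultimately show ?thesis
      using ai bi i0 j0 unfolding qlt_def x_def n0_def by (simp add: qle_same_fst padd_def v_mult)
  qed
  have "x i0 \<noteq> 0" unfolding x_def n0_def using i0 j0 by simp
  then have "coeff (p * q) n0 \<noteq> 0" "v (coeff (p * q) n0) = v (x i0)"
    unfolding coeff_mult x_def[symmetric] using v_sum_dominant[of "{..n0}" i0 x] strict
    unfolding n0_def by auto
  then have "padd (i0, v (?a i0)) (j0, v (?b j0)) \<in> coeff_vals (p * q)"
    using coeff_valsI[of "p * q" n0] unfolding padd_def n0_def x_def using i0 j0 by (simp add: v_mult)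
  then show ?thesis using that i0 j0 by blast
qed

end

section \<open>Valuations induced by a value function on polynomials\<close>

lemma Fract_eq_zero_iff: "b \<noteq> 0 \<Longrightarrow> Fract a b = 0 \<longleftrightarrow> a = 0"
  by (simp add: Zero_fract_def eq_fract)

lemma Fract_nonzero_cases:
  assumes "x \<noteq> 0"
  obtains f g where "x = Fract f g" "f \<noteq> 0" "g \<noteq> 0"
  using assms Fract_cases_nonzero by metis

text \<open>Both omega and omegaB are induced in this way by a value function on polynomials.\<close>
definition fract_rel :: "('m \<Rightarrow> 'm \<Rightarrow> bool) \<Rightarrow> ('m \<Rightarrow> 'm \<Rightarrow> 'm) \<Rightarrow> ('k::idom poly \<Rightarrow> 'm)
    \<Rightarrow> 'k poly fract \<Rightarrow> 'k poly fract \<Rightarrow> bool" where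
  "fract_rel le add w x y \<longleftrightarrow> y = 0 \<or> (x \<noteq> 0 \<and> (\<exists>f1 g1 f2 g2. g1 \<noteq> 0 \<and> g2 \<noteq> 0 \<and>
      x = Fract f1 g1 \<and> y = Fract f2 g2 \<and> le (add (w f1) (w g2)) (add (w f2) (w g1))))"

lemma omega_eq_fract_rel: "omega v a \<delta> = fract_rel (qle \<delta>) padd (omega_val v a \<delta>)"
  unfolding omega_def fract_rel_def by (intro ext) simp

lemma omegaB_eq_fract_rel: "omegaB v N = fract_rel (\<le>) (+) (wnest v N)"
  unfolding omegaB_def fract_rel_def by (intro ext) simp

locale poly_value_function = abel_semigroup add
  for add :: "'m \<Rightarrow> 'm \<Rightarrow> 'm" +
  fixes le :: "'m \<Rightarrow> 'm \<Rightarrow> bool" and C :: "'m set"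
    and w :: "'k::field poly \<Rightarrow> 'm" and v :: "'k \<Rightarrow> 'g::linordered_ab_group_add"
  assumes refl: "le s s"
    and trans: "le s t \<Longrightarrow> le t u \<Longrightarrow> le s u"
    and total: "s \<in> C \<Longrightarrow> t \<in> C \<Longrightarrow> le s t \<or> le t s"
    and cancel: "le (add s u) (add t u) \<longleftrightarrow> le s t"
    and add_closed: "s \<in> C \<Longrightarrow> t \<in> C \<Longrightarrow> add s t \<in> C"
    and w_in: "f \<noteq> 0 \<Longrightarrow> w f \<in> C"
    and w_mult_le: "f \<noteq> 0 \<Longrightarrow> g \<noteq> 0 \<Longrightarrow> le (w (f * g)) (add (w f) (w g))"
    and w_mult_ge: "f \<noteq> 0 \<Longrightarrow> g \<noteq> 0 \<Longrightarrow> le (add (w f) (w g)) (w (f * g))"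
    and w_add: "f \<noteq> 0 \<Longrightarrow> g \<noteq> 0 \<Longrightarrow> f + g \<noteq> 0 \<Longrightarrow> le (w f) (w (f + g)) \<or> le (w g) (w (f + g))"
    and w_const: "c \<noteq> 0 \<Longrightarrow> d \<noteq> 0 \<Longrightarrow> le (w [:c:]) (w [:d:]) \<longleftrightarrow> v c \<le> v d"
begin

definition eqv :: "'m \<Rightarrow> 'm \<Rightarrow> bool" where
  "eqv s t \<longleftrightarrow> le s t \<and> le t s"

lemma cancel_left: "le (add u s) (add u t) \<longleftrightarrow> le s t"
  by (metis cancel commute)

lemma add_mono: "le s t \<Longrightarrow> le s' t' \<Longrightarrow> le (add s s') (add t t')"
  by (meson cancel cancel_left trans)

lemma eqv_add: "eqv s t \<Longrightarrow> eqv s' t' \<Longrightarrow> eqv (add s s') (add t t')"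
  unfolding eqv_def using add_mono by blast

lemma le_cong: "eqv s s' \<Longrightarrow> eqv t t' \<Longrightarrow> le s t \<longleftrightarrow> le s' t'"
  unfolding eqv_def using trans by blast

lemma eqv_refl: "eqv s s"
  unfolding eqv_def using refl by blast

lemma eqv_sym: "eqv s t \<Longrightarrow> eqv t s"
  unfolding eqv_def by blast

lemma w_mult: "f \<noteq> 0 \<Longrightarrow> g \<noteq> 0 \<Longrightarrow> eqv (w (f * g)) (add (w f) (w g))"
  unfolding eqv_def using w_mult_le w_mult_ge by blast

lemma w_cross_eqv:
  assumes "g \<noteq> 0" "g' \<noteq> 0" "f \<noteq> 0" "f' \<noteq> 0" "f * g' = f' * g"
  shows "eqv (add (w f) (w g')) (add (w f') (w g))"
  using w_mult[of f g'] w_mult[of f' g] assms trans unfolding eqv_def by metis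

lemma le_representative_indep:
  assumes nz: "f1 \<noteq> 0" "g1 \<noteq> 0" "f2 \<noteq> 0" "g2 \<noteq> 0" "f1' \<noteq> 0" "g1' \<noteq> 0" "f2' \<noteq> 0" "g2' \<noteq> 0"
    and e1: "Fract f1 g1 = Fract f1' g1'" and e2: "Fract f2 g2 = Fract f2' g2'"
    and h: "le (add (w f1) (w g2)) (add (w f2) (w g1))"
  shows "le (add (w f1') (w g2')) (add (w f2') (w g1'))"
proof -
  let ?A = "w f1" and ?B = "w g1" and ?A' = "w f1'" and ?B' = "w g1'"
  let ?C = "w f2" and ?D = "w g2" and ?C' = "w f2'" and ?D' = "w g2'"
  have E1: "eqv (add ?A' ?B) (add ?A ?B')"
    using w_cross_eqv[of g1' g1 f1' f1] nz e1 by (simp add: eq_fract)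
  have E2: "eqv (add ?C ?D') (add ?C' ?D)"
    using w_cross_eqv[of g2 g2' f2 f2'] nz e2 by (simp add: eq_fract)
  have "le (add (add ?A ?D) (add ?B' ?D')) (add (add ?C ?B) (add ?B' ?D'))"
    using h cancel by blast
  moreover have "eqv (add (add ?A ?D) (add ?B' ?D')) (add (add ?A' ?D') (add ?B ?D))"
    using eqv_add[OF eqv_sym[OF E1] eqv_refl[of "add ?D ?D'"]] by (simp add: assoc commute left_commute)
  moreover have "eqv (add (add ?C ?B) (add ?B' ?D')) (add (add ?C' ?B') (add ?B ?D))"
    using eqv_add[OF E2 eqv_refl[of "add ?B ?B'"]] by (simp add: assoc commute left_commute)
  ultimately have "le (add (add ?A' ?D') (add ?B ?D)) (add (add ?C' ?B') (add ?B ?D))"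
    using le_cong by blast
  then show ?thesis using cancel by blast
qed

abbreviation rel :: "'k poly fract \<Rightarrow> 'k poly fract \<Rightarrow> bool" where
  "rel \<equiv> fract_rel le add w"

lemma rel_Fract_iff:
  assumes "f1 \<noteq> 0" "g1 \<noteq> 0" "f2 \<noteq> 0" "g2 \<noteq> 0"
  shows "rel (Fract f1 g1) (Fract f2 g2) \<longleftrightarrow> le (add (w f1) (w g2)) (add (w f2) (w g1))"
proof
  assume "rel (Fract f1 g1) (Fract f2 g2)"
  then obtain f1' g1' f2' g2' where h: "g1' \<noteq> 0" "g2' \<noteq> 0" "Fract f1 g1 = Fract f1' g1'"
    "Fract f2 g2 = Fract f2' g2'" "le (add (w f1') (w g2')) (add (w f2') (w g1'))"
    using assms unfolding fract_rel_def by (auto simp: Fract_eq_zero_iff)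
  have "f1' \<noteq> 0" "f2' \<noteq> 0"
    using h assms by (metis Fract_eq_zero_iff)+
  then show "le (add (w f1) (w g2)) (add (w f2) (w g1))"
    using le_representative_indep[of f1' g1' f2' g2' f1 g1 f2 g2] h assms by simp
next
  assume "le (add (w f1) (w g2)) (add (w f2) (w g1))"
  then show "rel (Fract f1 g1) (Fract f2 g2)"
    using assms unfolding fract_rel_def by (auto simp: Fract_eq_zero_iff)
qed

lemma rel_total: "rel x y \<or> rel y x"
proof (cases "x = 0 \<or> y = 0")
  case True
  then show ?thesis unfolding fract_rel_def by auto
next
  case False
  then obtain f1 g1 f2 g2 where x: "x = Fract f1 g1" "f1 \<noteq> 0" "g1 \<noteq> 0"
    and y: "y = Fract f2 g2" "f2 \<noteq> 0" "g2 \<noteq> 0"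
    by (meson Fract_nonzero_cases)
  then show ?thesis
    using total[OF add_closed add_closed] w_in rel_Fract_iff by simp
qed

lemma rel_trans:
  assumes xy: "rel x y" and yz: "rel y z"
  shows "rel x z"
proof (cases "x = 0 \<or> y = 0 \<or> z = 0")
  case True
  then show ?thesis using xy yz unfolding fract_rel_def by auto
next
  case False
  then obtain f1 g1 f2 g2 f3 g3 where x: "x = Fract f1 g1" "f1 \<noteq> 0" "g1 \<noteq> 0"
    and y: "y = Fract f2 g2" "f2 \<noteq> 0" "g2 \<noteq> 0" and z: "z = Fract f3 g3" "f3 \<noteq> 0" "g3 \<noteq> 0"
    by (meson Fract_nonzero_cases)
  have "le (add (add (w f1) (w g2)) (add (w f2) (w g3))) (add (add (w f2) (w g1)) (add (w f3) (w g2)))"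
    using add_mono xy yz rel_Fract_iff x y z by simp
  then have "le (add (add (w f1) (w g3)) (add (w f2) (w g2))) (add (add (w f3) (w g1)) (add (w f2) (w g2)))"
    by (simp add: assoc commute left_commute)
  then show ?thesis
    using cancel rel_Fract_iff x z by simp
qed

lemma rel_mult:
  assumes xy: "rel x y"
  shows "rel (x * z) (y * z)"
proof (cases "x = 0 \<or> y = 0 \<or> z = 0")
  case True
  then show ?thesis using xy unfolding fract_rel_def by auto
next
  case False
  then obtain f1 g1 f2 g2 f3 g3 where x: "x = Fract f1 g1" "f1 \<noteq> 0" "g1 \<noteq> 0"
    and y: "y = Fract f2 g2" "f2 \<noteq> 0" "g2 \<noteq> 0" and z: "z = Fract f3 g3" "f3 \<noteq> 0" "g3 \<noteq> 0"
    by (meson Fract_nonzero_cases)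
  have "le (add (add (w f1) (w g2)) (add (w f3) (w g3))) (add (add (w f2) (w g1)) (add (w f3) (w g3)))"
    using xy rel_Fract_iff x y cancel by simp
  moreover have "eqv (add (add (w f1) (w g2)) (add (w f3) (w g3))) (add (w (f1 * f3)) (w (g2 * g3)))"
    using eqv_add[OF w_mult[of f1 f3] w_mult[of g2 g3]] x y z eqv_sym
    by (simp add: assoc commute left_commute)
  moreover have "eqv (add (add (w f2) (w g1)) (add (w f3) (w g3))) (add (w (f2 * f3)) (w (g1 * g3)))"
    using eqv_add[OF w_mult[of f2 f3] w_mult[of g1 g3]] x y z eqv_sym
    by (simp add: assoc commute left_commute)
  ultimately have "le (add (w (f1 * f3)) (w (g2 * g3))) (add (w (f2 * f3)) (w (g1 * g3)))"
    using le_cong by blast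
  then show ?thesis
    using rel_Fract_iff[of "f1 * f3" "g1 * g3" "f2 * f3" "g2 * g3"] x y z by simp
qed

lemma rel_add_nonzero:
  assumes xy: "rel x y" and xz: "rel x z" and nz: "y \<noteq> 0" "z \<noteq> 0" "y + z \<noteq> 0"
  shows "rel x (y + z)"
proof -
  have "x \<noteq> 0" using xy nz unfolding fract_rel_def by auto
  with nz obtain f1 g1 f2 g2 f3 g3 where x: "x = Fract f1 g1" "f1 \<noteq> 0" "g1 \<noteq> 0"
    and y: "y = Fract f2 g2" "f2 \<noteq> 0" "g2 \<noteq> 0" and z: "z = Fract f3 g3" "f3 \<noteq> 0" "g3 \<noteq> 0"
    by (meson Fract_nonzero_cases)
  let ?N = "f2 * g3 + f3 * g2"
  have yz: "y + z = Fract ?N (g2 * g3)" using y z by simp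
  have N: "?N \<noteq> 0" using nz yz y z by (auto simp: Fract_eq_zero_iff)
  have "y = Fract (f2 * g3) (g2 * g3)" "z = Fract (f3 * g2) (g2 * g3)"
    using y z by (simp_all add: eq_fract)
  then have "le (add (w f1) (w (g2 * g3))) (add (w (f2 * g3)) (w g1))"
    "le (add (w f1) (w (g2 * g3))) (add (w (f3 * g2)) (w g1))"
    using xy xz rel_Fract_iff x y z by simp_all
  moreover have "le (w (f2 * g3)) (w ?N) \<or> le (w (f3 * g2)) (w ?N)"
    using w_add y z N by simp
  ultimately have "le (add (w f1) (w (g2 * g3))) (add (w ?N) (w g1))"
    using trans cancel by blast
  then show ?thesis
    using rel_Fract_iff[of f1 g1 ?N "g2 * g3"] x y z N yz by simp
qed

lemma rel_add:
  assumes xy: "rel x y" and xz: "rel x z"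
  shows "rel x (y + z)"
proof -
  consider "y + z = 0" | "y = 0" | "z = 0" | "y \<noteq> 0" "z \<noteq> 0" "y + z \<noteq> 0"
    by blast
  then show ?thesis
  proof cases
    case 1
    then show ?thesis unfolding fract_rel_def by simp
  next
    case 2
    then show ?thesis using xz by simp
  next
    case 3
    then show ?thesis using xy by simp
  next
    case 4
    then show ?thesis using rel_add_nonzero xy xz by blast
  qed
qed

lemma rel_cst_iff:
  assumes "c \<noteq> 0" "d \<noteq> 0"
  shows "rel (cst c) (cst d) \<longleftrightarrow> v c \<le> v d"
proof -
  have "rel (cst c) (cst d) \<longleftrightarrow> le (add (w [:c:]) (w 1)) (add (w [:d:]) (w 1))"
    unfolding cst_def using assms by (intro rel_Fract_iff) auto
  also have "\<dots> \<longleftrightarrow> v c \<le> v d"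
    using cancel w_const assms by simp
  finally show ?thesis .
qed

lemma rel_val_class: "is_val_class v rel"
proof -
  have "rel x 0" and "rel 0 x \<Longrightarrow> x = 0" for x
    unfolding fract_rel_def by simp_all
  then show ?thesis
    unfolding is_val_class_def using rel_total rel_trans rel_mult rel_add rel_cst_iff by blast
qed

end

section \<open>The valuations omega_{a,delta}\<close>

lemma pcompose_linear:
  fixes a r :: "'a::field"
  shows "pcompose [:-r, 1:] [:a, 1:] = [:a - r, 1:]"
  by (simp add: pcompose_pCons algebra_simps)

context alg_closed_valued_field
begin

abbreviation shift :: "'k \<Rightarrow> 'k poly \<Rightarrow> 'k poly" where
  "shift a f \<equiv> pcompose f [:a, 1:]"

lemma shift_nonzero: "f \<noteq> 0 \<Longrightarrow> shift a f \<noteq> 0"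
  using pcompose_eq_0[of f "[:a, 1:]"] by auto

lemma omega_val_min:
  assumes "\<delta> \<in> Qcuts \<Gamma>" "f \<noteq> 0"
  shows "omega_val v a \<delta> f \<in> coeff_vals (shift a f)"
    "\<forall>s\<in>coeff_vals (shift a f). qle \<delta> (omega_val v a \<delta> f) s"
proof -
  have "\<exists>t. t \<in> coeff_vals (shift a f) \<and> (\<forall>s\<in>coeff_vals (shift a f). qle \<delta> t s)"
    using qle_min_exists[OF assms(1) coeff_vals_finite coeff_vals_nonempty[OF shift_nonzero[OF assms(2)]]]
      coeff_vals_valgroup by blast
  then have "omega_val v a \<delta> f \<in> coeff_vals (shift a f) \<and>
      (\<forall>s\<in>coeff_vals (shift a f). qle \<delta> (omega_val v a \<delta> f) s)"
    unfolding omega_val_def terms_eq_coeff_vals by (rule someI_ex)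
  then show "omega_val v a \<delta> f \<in> coeff_vals (shift a f)"
    "\<forall>s\<in>coeff_vals (shift a f). qle \<delta> (omega_val v a \<delta> f) s" by auto
qed

lemma omega_val_valgroup: "\<delta> \<in> Qcuts \<Gamma> \<Longrightarrow> f \<noteq> 0 \<Longrightarrow> snd (omega_val v a \<delta> f) \<in> \<Gamma>"
  using omega_val_min coeff_vals_valgroup by blast

lemma omega_val_mult:
  assumes d: "\<delta> \<in> Qcuts \<Gamma>" and f: "f \<noteq> 0" and g: "g \<noteq> 0"
  shows "qeq \<delta> (omega_val v a \<delta> (f * g)) (padd (omega_val v a \<delta> f) (omega_val v a \<delta> g))"
proof -
  note mf = omega_val_min[OF d f, of a] and mg = omega_val_min[OF d g, of a]
  have m: "omega_val v a \<delta> (f * g) \<in> coeff_vals (shift a f * shift a g)"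
    "\<forall>s\<in>coeff_vals (shift a f * shift a g). qle \<delta> (omega_val v a \<delta> (f * g)) s"
    using omega_val_min[OF d, of "f * g" a] f g by (auto simp: pcompose_mult)
  obtain i j where ij: "\<forall>s\<in>coeff_vals (shift a f). qle \<delta> (i, v (coeff (shift a f) i)) s"
    "\<forall>s\<in>coeff_vals (shift a g). qle \<delta> (j, v (coeff (shift a g) j)) s"
    "coeff (shift a f) i \<noteq> 0" "coeff (shift a g) j \<noteq> 0"
    "padd (i, v (coeff (shift a f) i)) (j, v (coeff (shift a g) j)) \<in> coeff_vals (shift a f * shift a g)"
    using coeff_vals_mult_attained[OF d shift_nonzero[OF f] shift_nonzero[OF g]] by metis
  have "qeq \<delta> (i, v (coeff (shift a f) i)) (omega_val v a \<delta> f)"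
    "qeq \<delta> (j, v (coeff (shift a g) j)) (omega_val v a \<delta> g)"
    unfolding qeq_def using mf mg ij coeff_valsI by blast+
  then have "qle \<delta> (padd (omega_val v a \<delta> f) (omega_val v a \<delta> g)) (omega_val v a \<delta> (f * g))"
    "qle \<delta> (omega_val v a \<delta> (f * g)) (padd (omega_val v a \<delta> f) (omega_val v a \<delta> g))"
    using coeff_vals_mult_lower_bound[OF d mf(2) mg(2) m(1)] m(2) ij(5) qeq_padd[OF d]
      qle_trans[OF d] unfolding qeq_def by blast+
  then show ?thesis unfolding qeq_def by blast
qed

lemma omega_val_add:
  assumes d: "\<delta> \<in> Qcuts \<Gamma>" and "f \<noteq> 0" "g \<noteq> 0" "f + g \<noteq> 0"
  shows "qle \<delta> (omega_val v a \<delta> f) (omega_val v a \<delta> (f + g)) \<or>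
    qle \<delta> (omega_val v a \<delta> g) (omega_val v a \<delta> (f + g))"
proof -
  have "omega_val v a \<delta> (f + g) \<in> coeff_vals (shift a f + shift a g)"
    using omega_val_min[OF d assms(4), of a] by (simp add: pcompose_add)
  then show ?thesis
    using coeff_vals_add_lower_bound[OF d] omega_val_min[OF d] assms by blast
qed

lemma omega_val_const: "\<delta> \<in> Qcuts \<Gamma> \<Longrightarrow> c \<noteq> 0 \<Longrightarrow> omega_val v a \<delta> [:c:] = (0, v c)"
  using omega_val_min[of \<delta> "[:c:]" a] coeff_vals_const by auto

lemma omega_val_one: "\<delta> \<in> Qcuts \<Gamma> \<Longrightarrow> omega_val v a \<delta> 1 = (0, 0)"
  using omega_val_const[of \<delta> 1 a] by (simp add: one_pCons)

lemma omega_val_linear: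
  assumes "\<delta> \<in> Qcuts \<Gamma>"
  shows "omega_val v a \<delta> [:-r, 1:] \<in> {(1, 0)} \<union> (if a = r then {} else {(0, v (a - r))})"
    "qle \<delta> (omega_val v a \<delta> [:-r, 1:]) (1, 0)"
    "a \<noteq> r \<Longrightarrow> qle \<delta> (omega_val v a \<delta> [:-r, 1:]) (0, v (a - r))"
  using omega_val_min[OF assms, of "[:-r, 1:]" a] unfolding pcompose_linear coeff_vals_linear by auto

lemma omega_poly_value_function:
  assumes d: "\<delta> \<in> Qcuts \<Gamma>"
  shows "poly_value_function padd (qle \<delta>) {s. snd s \<in> \<Gamma>} (omega_val v a \<delta>) v"
proof
  show "qle \<delta> s t \<Longrightarrow> qle \<delta> t u \<Longrightarrow> qle \<delta> s u" for s t u
    using qle_trans[OF d] by blast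
  show "s \<in> {s. snd s \<in> \<Gamma>} \<Longrightarrow> t \<in> {s. snd s \<in> \<Gamma>} \<Longrightarrow> qle \<delta> s t \<or> qle \<delta> t s" for s t
    using qle_total[OF d] by auto
  show "s \<in> {s. snd s \<in> \<Gamma>} \<Longrightarrow> t \<in> {s. snd s \<in> \<Gamma>} \<Longrightarrow> padd s t \<in> {s. snd s \<in> \<Gamma>}" for s t
    by (auto simp: padd_def valgroup_add)
  show "f \<noteq> 0 \<Longrightarrow> g \<noteq> 0 \<Longrightarrow> qle \<delta> (omega_val v a \<delta> (f * g)) (padd (omega_val v a \<delta> f) (omega_val v a \<delta> g))"
    "f \<noteq> 0 \<Longrightarrow> g \<noteq> 0 \<Longrightarrow> qle \<delta> (padd (omega_val v a \<delta> f) (omega_val v a \<delta> g)) (omega_val v a \<delta> (f * g))"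
    for f g using omega_val_mult[OF d] unfolding qeq_def by blast+
  show "qle \<delta> (padd s u) (padd t u) = qle \<delta> s t" for s t u
    by (rule qle_padd_right)
  show "c \<noteq> 0 \<Longrightarrow> d \<noteq> 0 \<Longrightarrow> qle \<delta> (omega_val v a \<delta> [:c:]) (omega_val v a \<delta> [:d:]) \<longleftrightarrow> v c \<le> v d"
    for c d using omega_val_const[OF d] by (simp add: qle_same_fst)
qed (use padd_assoc padd_commute qle_refl[of \<delta>] omega_val_valgroup[OF d] omega_val_add[OF d] in auto)

lemma omega_val_class: "\<delta> \<in> Qcuts \<Gamma> \<Longrightarrow> is_val_class v (omega v a \<delta>)"
  unfolding omega_eq_fract_rel using poly_value_function.rel_val_class[OF omega_poly_value_function] .

lemma omega_Fract_iff:
  assumes "\<delta> \<in> Qcuts \<Gamma>" "f1 \<noteq> 0" "g1 \<noteq> 0" "f2 \<noteq> 0" "g2 \<noteq> 0"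
  shows "omega v a \<delta> (Fract f1 g1) (Fract f2 g2) \<longleftrightarrow>
    qle \<delta> (padd (omega_val v a \<delta> f1) (omega_val v a \<delta> g2)) (padd (omega_val v a \<delta> f2) (omega_val v a \<delta> g1))"
  unfolding omega_eq_fract_rel
  using poly_value_function.rel_Fract_iff[OF omega_poly_value_function[OF assms(1)]] assms(2-) by blast

end

section \<open>Valuation classes\<close>

lemma pfr_mult: "pfr (f * g) = pfr f * pfr g"
  unfolding pfr_def by simp

lemma pfr_nonzero: "f \<noteq> 0 \<Longrightarrow> pfr f \<noteq> 0"
  unfolding pfr_def by (simp add: Fract_eq_zero_iff)

lemma cst_eq_pfr: "cst c = pfr [:c:]"
  unfolding cst_def pfr_def ..

lemma cst_mult: "cst c * cst d = cst (c * d)"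
  unfolding cst_def by (simp add: mult.commute)

lemma cst_one [simp]: "cst 1 = 1"
  unfolding cst_def One_fract_def by (simp add: one_pCons)

lemma cst_minus_one: "cst (-1) = - 1"
  unfolding cst_def by (simp add: One_fract_def one_pCons)

lemma cst_nonzero: "c \<noteq> 0 \<Longrightarrow> cst c \<noteq> 0"
  unfolding cst_def by (simp add: Fract_eq_zero_iff)

lemma cst_power: "cst c ^ n = cst (c ^ n)"
  by (induction n) (auto simp: cst_mult[symmetric] mult.commute)

lemma Fract_mult_pfr: "g1 \<noteq> 0 \<Longrightarrow> g2 \<noteq> 0 \<Longrightarrow> Fract f1 g1 * pfr (g1 * g2) = pfr (f1 * g2)"
  unfolding pfr_def by (simp add: eq_fract)

definition lin :: "'k::field \<Rightarrow> 'k poly fract" where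
  "lin r = pfr [:-r, 1:]"

lemma lin_nonzero: "lin r \<noteq> 0"
  unfolding lin_def by (simp add: pfr_nonzero)

lemma lin_eq_add_cst: "lin r = lin a + cst (a - r)"
  unfolding lin_def pfr_def cst_def by simp

lemma lin_diff: "lin c - lin b = cst (b - c)"
  unfolding lin_def pfr_def cst_def by simp

locale val_class = alg_closed_valued_field v for v :: "'k::field \<Rightarrow> 'g::linordered_ab_group_add" +
  fixes Q :: "'k poly fract \<Rightarrow> 'k poly fract \<Rightarrow> bool"
  assumes val_class: "is_val_class v Q"
begin

lemmas Q_axioms = val_class[unfolded is_val_class_def]

lemma Q_total: "Q x y \<or> Q y x"
  using Q_axioms[THEN conjunct1] by blast

lemma Q_trans: "Q x y \<Longrightarrow> Q y z \<Longrightarrow> Q x z"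
  using Q_axioms[THEN conjunct2, THEN conjunct1] by blast

lemma Q_refl: "Q x x"
  using Q_total by blast

lemma Q_zero: "Q x 0"
  using Q_axioms[THEN conjunct2, THEN conjunct2, THEN conjunct1] by blast

lemma Q_zero_imp: "Q 0 x \<Longrightarrow> x = 0"
  using Q_axioms[THEN conjunct2, THEN conjunct2, THEN conjunct2, THEN conjunct1] by blast

lemma Q_mult: "Q x y \<Longrightarrow> Q (x * z) (y * z)"
  using Q_axioms[THEN conjunct2, THEN conjunct2, THEN conjunct2, THEN conjunct2, THEN conjunct1] by blast

lemma Q_add: "Q x y \<Longrightarrow> Q x z \<Longrightarrow> Q x (y + z)"
  using Q_axioms[THEN conjunct2, THEN conjunct2, THEN conjunct2, THEN conjunct2, THEN conjunct2, THEN conjunct1] by blast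

lemma Q_cst_iff: "c \<noteq> 0 \<Longrightarrow> d \<noteq> 0 \<Longrightarrow> Q (cst c) (cst d) \<longleftrightarrow> v c \<le> v d"
  using Q_axioms[THEN conjunct2, THEN conjunct2, THEN conjunct2, THEN conjunct2, THEN conjunct2, THEN conjunct2] by blast

lemma Q_mult_cancel_iff:
  assumes "z \<noteq> 0"
  shows "Q (x * z) (y * z) \<longleftrightarrow> Q x y"
proof
  assume "Q (x * z) (y * z)"
  from Q_mult[OF this, of "inverse z"] show "Q x y"
    using assms by (simp add: field_simps)
qed (rule Q_mult)

lemma Q_mult_mono:
  assumes "Q x y" "Q x' y'"
  shows "Q (x * x') (y * y')"
proof -
  have "Q (x * x') (y * x')" "Q (x' * y) (y' * y)"
    using Q_mult assms by blast+
  then show ?thesis using Q_trans by (simp add: mult.commute)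
qed

lemma Q_power: "Q x y \<Longrightarrow> Q (x ^ k) (y ^ k)"
  by (induction k) (auto simp: Q_refl intro: Q_mult_mono)

definition Qeq :: "'k poly fract \<Rightarrow> 'k poly fract \<Rightarrow> bool" where
  "Qeq x y \<longleftrightarrow> Q x y \<and> Q y x"

definition Qlt :: "'k poly fract \<Rightarrow> 'k poly fract \<Rightarrow> bool" where
  "Qlt x y \<longleftrightarrow> \<not> Q y x"

lemma Qeq_refl: "Qeq x x"
  unfolding Qeq_def using Q_refl by blast

lemma Qeq_sym: "Qeq x y \<Longrightarrow> Qeq y x"
  unfolding Qeq_def by blast

lemma Qeq_trans: "Qeq x y \<Longrightarrow> Qeq y z \<Longrightarrow> Qeq x z"
  unfolding Qeq_def using Q_trans by blast

lemma Qeq_mult: "Qeq x y \<Longrightarrow> Qeq x' y' \<Longrightarrow> Qeq (x * x') (y * y')"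
  unfolding Qeq_def using Q_mult_mono by blast

lemma Q_cong: "Qeq x x' \<Longrightarrow> Qeq y y' \<Longrightarrow> Q x y \<longleftrightarrow> Q x' y'"
  unfolding Qeq_def using Q_trans by blast

lemma Qlt_imp_Q: "Qlt x y \<Longrightarrow> Q x y"
  unfolding Qlt_def using Q_total by blast

lemma Q_Qlt_trans: "Q x y \<Longrightarrow> Qlt y z \<Longrightarrow> Qlt x z"
  unfolding Qlt_def using Q_trans by blast

lemma Qeq_uminus: "Qeq (- x) x"
proof -
  have "Qeq (cst (-1)) 1"
    using Q_cst_iff[of "-1" 1] Q_cst_iff[of 1 "-1"] v_minus_one unfolding Qeq_def by simp
  from Qeq_mult[OF this Qeq_refl[of x]] have "Qeq (cst (-1) * x) x"
    by simp
  then show ?thesis by (simp add: cst_minus_one)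
qed

lemma Q_diff:
  assumes "Q x y" "Q x z"
  shows "Q x (y - z)"
proof -
  have "Q x (- z)"
    using assms(2) Qeq_uminus[of z] Q_trans unfolding Qeq_def by blast
  from Q_add[OF assms(1) this] show ?thesis by simp
qed

lemma Qeq_add_dominant:
  assumes "Qlt x y"
  shows "Qeq (x + y) x"
proof -
  have "Q (x + y) x"
  proof (rule ccontr)
    assume n: "\<not> Q (x + y) x"
    \<comment> \<open>x = (x + y) + (-y), so Q(x) \<ge> min(Q(x + y), Q(y))\<close>
    from Q_total[of "x + y" "- y"] show False
    proof
      assume "Q (x + y) (- y)"
      then have "Q (x + y) ((x + y) + - y)" using Q_add[OF Q_refl] by blast
      then show False using n by simp
    next
      assume "Q (- y) (x + y)"
      then have "Q (- y) x" using Q_add[OF Q_refl, of "- y" "x + y"] by simp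
      then have "Q y x" using Qeq_uminus[of y] Q_trans unfolding Qeq_def by blast
      then show False using assms unfolding Qlt_def by blast
    qed
  qed
  moreover have "Q x (x + y)"
    using Q_add[OF Q_refl Qlt_imp_Q[OF assms]] .
  ultimately show ?thesis unfolding Qeq_def by blast
qed

lemma Qeq_add_dominant': "Qlt y x \<Longrightarrow> Qeq (x + y) y"
  using Qeq_add_dominant[of y x] by (simp add: add.commute)

lemma Qeq_diff_dominant:
  assumes "Qlt x y"
  shows "Qeq (x - y) x"
proof -
  have "Qlt x (- y)"
    using assms Qeq_uminus[of y] Q_trans unfolding Qlt_def Qeq_def by blast
  from Qeq_add_dominant[OF this] show ?thesis by simp
qed

lemma Qlt_mult_mono:
  assumes "Qlt x y" "Q x' y'" "y' \<noteq> 0"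
  shows "Qlt (x * x') (y * y')"
  unfolding Qlt_def
proof
  assume "Q (y * y') (x * x')"
  moreover have "Q (x * x') (x * y')"
    using Q_mult[OF assms(2), of x] by (simp add: mult.commute)
  ultimately have "Q y x"
    using Q_trans Q_mult_cancel_iff[OF assms(3)] by blast
  then show False using assms(1) unfolding Qlt_def by blast
qed

lemma Qlt_power:
  assumes "Qlt x y" "y \<noteq> 0" "k > 0"
  shows "Qlt (x ^ k) (y ^ k)"
  using assms(3)
proof (induction k)
  case (Suc k)
  show ?case
  proof (cases "k = 0")
    case False
    then have "Qlt (x ^ k * x) (y ^ k * y)"
      using Suc Qlt_mult_mono Qlt_imp_Q[OF assms(1)] assms(2) by blast
    then show ?thesis by (simp add: mult.commute)
  qed (use assms in simp)
qed simp

lemma Q_power_cancel: "Q (x ^ k) (y ^ k) \<Longrightarrow> x \<noteq> 0 \<Longrightarrow> k > 0 \<Longrightarrow> Q x y"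
  using Qlt_power[of y x k] unfolding Qlt_def by blast

lemma Qeq_cst_diff_commute: "Qeq (cst (r - a)) (cst (a - r))"
proof (cases "r = a")
  case False
  then show ?thesis unfolding Qeq_def using Q_cst_iff v_diff_commute[of r a] by simp
qed (simp add: Qeq_refl)

lemma Q_Fract_iff:
  assumes "f1 \<noteq> 0" "g1 \<noteq> 0" "f2 \<noteq> 0" "g2 \<noteq> 0"
  shows "Q (Fract f1 g1) (Fract f2 g2) \<longleftrightarrow> Q (pfr (f1 * g2)) (pfr (f2 * g1))"
proof -
  have "Fract f2 g2 * pfr (g1 * g2) = pfr (f2 * g1)"
    using Fract_mult_pfr[of g2 g1 f2] assms by (simp add: mult.commute)
  then show ?thesis
    using Q_mult_cancel_iff[OF pfr_nonzero, of "g1 * g2" "Fract f1 g1" "Fract f2 g2"]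
      Fract_mult_pfr[of g1 g2 f1] assms by simp
qed

end

section \<open>Valuation classes with a centre\<close>

context val_class
begin

definition lin_cut :: "'k \<Rightarrow> 'g set \<times> 'g set" where
  "lin_cut a = ({v c | c. c \<noteq> 0 \<and> Q (cst c) (lin a)}, {v c | c. c \<noteq> 0 \<and> Q (lin a) (cst c)})"

lemma lin_cut_Qcuts: "lin_cut a \<in> Qcuts \<Gamma>"
proof -
  have "fst (lin_cut a) \<union> snd (lin_cut a) = \<Gamma>"
    unfolding lin_cut_def using valgroupI Q_total[of "lin a"] by (auto elim!: valgroupE)
  moreover have "l \<le> r" if lr: "l \<in> fst (lin_cut a)" "r \<in> snd (lin_cut a)" for l r
  proof -
    obtain c d where "c \<noteq> 0" "d \<noteq> 0" "l = v c" "r = v d" "Q (cst c) (lin a)" "Q (lin a) (cst d)"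
      using lr unfolding lin_cut_def by auto
    then show ?thesis using Q_trans Q_cst_iff by blast
  qed
  ultimately show ?thesis unfolding Qcuts_def by (cases "lin_cut a") auto
qed

lemma lin_cut_eq_qc_minf:
  assumes "\<forall>c. c \<noteq> 0 \<longrightarrow> \<not> Q (cst c) (lin a)"
  shows "lin_cut a = qc_minf \<Gamma>"
  unfolding lin_cut_def qc_minf_def
  using assms Q_total[of "lin a"] valgroupI by (auto elim!: valgroupE)

lemma lin_cut_eq_qc_inftym:
  assumes "\<forall>c. c \<noteq> 0 \<longrightarrow> \<not> Q (lin a) (cst c)"
  shows "lin_cut a = qc_inftym \<Gamma>"
  unfolding lin_cut_def qc_inftym_def
  using assms Q_total[of "lin a"] valgroupI by (auto elim!: valgroupE)

definition lin_monom :: "'k \<Rightarrow> nat \<Rightarrow> 'k \<Rightarrow> 'k poly fract" where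
  "lin_monom a n c = lin a ^ n * cst c"

lemma lin_monom_mult: "lin_monom a n c * lin_monom a m d = lin_monom a (n + m) (c * d)"
  unfolding lin_monom_def by (simp add: power_add cst_mult[symmetric] ac_simps)

lemma Q_lin_power_cst_iff:
  assumes "k > 0" "b \<noteq> 0"
  shows "Q (lin a ^ k) (cst b) \<longleftrightarrow> xle (lin_cut a) (int k) (v b)"
proof
  assume h: "Q (lin a ^ k) (cst b)"
  obtain e where e: "e \<noteq> 0" "e ^ k = b"
    using nth_root_exists assms by blast
  then have "Q (lin a) (cst e)"
    using Q_power_cancel[of "lin a" k "cst e"] h lin_nonzero[of a] assms by (simp add: cst_power)
  then have "v e \<in> snd (lin_cut a)"
    unfolding lin_cut_def using e by auto
  moreover have "gmul k (v e) = v b"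
    using v_power e by metis
  ultimately show "xle (lin_cut a) (int k) (v b)"
    using assms by (subst xle_pos) (auto intro!: bexI[of _ "v e"])
next
  assume "xle (lin_cut a) (int k) (v b)"
  then obtain e where e: "e \<noteq> 0" "Q (lin a) (cst e)" "gmul k (v e) \<le> v b"
    using assms unfolding lin_cut_def by (subst (asm) xle_pos) auto
  have "Q (lin a ^ k) (cst (e ^ k))"
    using Q_power[OF e(2)] by (simp add: cst_power)
  moreover have "Q (cst (e ^ k)) (cst b)"
    using Q_cst_iff e assms v_power by simp
  ultimately show "Q (lin a ^ k) (cst b)"
    using Q_trans by blast
qed

lemma Q_cst_lin_power_iff:
  assumes "k > 0" "b \<noteq> 0"
  shows "Q (cst b) (lin a ^ k) \<longleftrightarrow> xle (lin_cut a) (- int k) (- v b)"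
proof
  assume h: "Q (cst b) (lin a ^ k)"
  obtain e where e: "e \<noteq> 0" "e ^ k = b"
    using nth_root_exists assms by blast
  then have "Q (cst e) (lin a)"
    using Q_power_cancel[of "cst e" k "lin a"] h cst_nonzero[OF e(1)] assms by (simp add: cst_power)
  then have "v e \<in> fst (lin_cut a)"
    unfolding lin_cut_def using e by auto
  moreover have "gmul k (v e) = v b"
    using v_power e by metis
  ultimately show "xle (lin_cut a) (- int k) (- v b)"
    using assms by (subst xle_neg) (auto intro!: bexI[of _ "v e"])
next
  assume "xle (lin_cut a) (- int k) (- v b)"
  then obtain e where e: "e \<noteq> 0" "Q (cst e) (lin a)" "v b \<le> gmul k (v e)"
    using assms unfolding lin_cut_def by (subst (asm) xle_neg) auto
  have "Q (cst (e ^ k)) (lin a ^ k)"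
    using Q_power[OF e(2)] by (simp add: cst_power)
  moreover have "Q (cst b) (cst (e ^ k))"
    using Q_cst_iff e assms v_power by simp
  ultimately show "Q (cst b) (lin a ^ k)"
    using Q_trans by blast
qed

lemma Q_lin_monom_iff:
  assumes "c \<noteq> 0" "d \<noteq> 0"
  shows "Q (lin_monom a n c) (lin_monom a m d) \<longleftrightarrow> qle (lin_cut a) (n, v c) (m, v d)"
proof -
  consider "n = m" | k where "n = m + k" "k > 0" | k where "m = n + k" "k > 0"
    by (metis less_imp_add_positive nat_neq_iff)
  then show ?thesis
  proof cases
    case 1
    then have "Q (lin_monom a n c) (lin_monom a m d) \<longleftrightarrow> Q (cst c) (cst d)"
      using Q_mult_cancel_iff[of "lin a ^ m" "cst c" "cst d"] lin_nonzero[of a]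
      unfolding lin_monom_def by (simp add: mult.commute)
    then show ?thesis using 1 Q_cst_iff assms by (simp add: qle_same_fst)
  next
    case (2 k)
    have "Q (lin_monom a n c) (lin_monom a m d) \<longleftrightarrow> Q (lin a ^ k * cst c) (cst (d / c) * cst c)"
      using Q_mult_cancel_iff[of "lin a ^ m" "lin a ^ k * cst c" "cst d"] lin_nonzero[of a] assms
      unfolding lin_monom_def 2 by (simp add: power_add cst_mult ac_simps)
    also have "\<dots> \<longleftrightarrow> xle (lin_cut a) (int k) (v d - v c)"
      using Q_mult_cancel_iff[OF cst_nonzero[OF assms(1)]] Q_lin_power_cst_iff[OF 2(2), of "d / c"]
        assms v_divide by simp
    finally show ?thesis
      unfolding qle_def 2 by simp
  next
    case (3 k)
    have "Q (lin_monom a n c) (lin_monom a m d) \<longleftrightarrow> Q (cst (c / d) * cst d) (lin a ^ k * cst d)"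
      using Q_mult_cancel_iff[of "lin a ^ n" "cst c" "lin a ^ k * cst d"] lin_nonzero[of a] assms
      unfolding lin_monom_def 3 by (simp add: power_add cst_mult ac_simps)
    also have "\<dots> \<longleftrightarrow> xle (lin_cut a) (- int k) (- v (c / d))"
      using Q_mult_cancel_iff[OF cst_nonzero[OF assms(2)]] Q_cst_lin_power_iff[OF 3(2), of "c / d"]
        assms by simp
    finally show ?thesis
      unfolding qle_def 3 using assms v_divide by simp
  qed
qed

end

context val_class
begin

text \<open>a is a centre of Q: Q(x - r) = min(Q(x - a), v(r - a)) for every r.\<close>
definition is_centre :: "'k \<Rightarrow> bool" where
  "is_centre a \<longleftrightarrow> (\<forall>r. r \<noteq> a \<longrightarrow>
     (Q (lin a) (cst (r - a)) \<and> Qeq (lin r) (lin a)) \<or> (Q (cst (r - a)) (lin a) \<and> Qeq (lin r) (cst (r - a))))"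

lemma omega_val_lin_cut_linear:
  assumes "r \<noteq> a"
  shows "omega_val v a (lin_cut a) [:-r, 1:] \<in> {(1, 0), (0, v (r - a))}"
    "qle (lin_cut a) (omega_val v a (lin_cut a) [:-r, 1:]) (1, 0)"
    "qle (lin_cut a) (omega_val v a (lin_cut a) [:-r, 1:]) (0, v (r - a))"
proof -
  note linear = omega_val_linear[OF lin_cut_Qcuts[of a], of a r]
  show "omega_val v a (lin_cut a) [:-r, 1:] \<in> {(1, 0), (0, v (r - a))}"
    using linear(1) assms v_diff_commute[of a r] by auto
  show "qle (lin_cut a) (omega_val v a (lin_cut a) [:-r, 1:]) (1, 0)"
    using linear(2) .
  show "qle (lin_cut a) (omega_val v a (lin_cut a) [:-r, 1:]) (0, v (r - a))"
    using linear(3)[OF not_sym[OF assms]] v_diff_commute[of a r] by simp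
qed

lemma omega_val_lin_cut_linear_eq_x:
  assumes "r \<noteq> a" "Q (lin a) (cst (r - a))"
  shows "qeq (lin_cut a) (omega_val v a (lin_cut a) [:-r, 1:]) (1, 0)"
proof -
  have "v (r - a) \<in> snd (lin_cut a)"
    unfolding lin_cut_def using assms by auto
  then have "qle (lin_cut a) (1, 0) (0, v (r - a))"
    unfolding qle_def by (subst xle_pos) (auto intro!: bexI[of _ "v (r - a)"])
  then show ?thesis
    using omega_val_lin_cut_linear[OF assms(1)] qle_refl[of "lin_cut a"] unfolding qeq_def by auto
qed

lemma omega_val_lin_cut_linear_eq_const:
  assumes "r \<noteq> a" "Q (cst (r - a)) (lin a)"
  shows "qeq (lin_cut a) (omega_val v a (lin_cut a) [:-r, 1:]) (0, v (r - a))"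
proof -
  have "v (r - a) \<in> fst (lin_cut a)"
    unfolding lin_cut_def using assms by auto
  then have "qle (lin_cut a) (0, v (r - a)) (1, 0)"
    unfolding qle_def by (subst xle_neg) (auto intro!: bexI[of _ "v (r - a)"])
  then show ?thesis
    using omega_val_lin_cut_linear[OF assms(1)] qle_refl[of "lin_cut a"] unfolding qeq_def by auto
qed

lemma is_centre_lin_equiv_monom:
  assumes "is_centre a"
  shows "\<exists>n c. c \<noteq> 0 \<and> Qeq (lin r) (lin_monom a n c) \<and>
    qeq (lin_cut a) (omega_val v a (lin_cut a) [:-r, 1:]) (n, v c)"
proof -
  have monom_lin: "lin_monom a 1 1 = lin a" and monom_cst: "lin_monom a 0 c = cst c" for c
    unfolding lin_monom_def by simp_all
  consider "r = a" | "r \<noteq> a" "Q (lin a) (cst (r - a))" "Qeq (lin r) (lin a)"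
    | "r \<noteq> a" "Q (cst (r - a)) (lin a)" "Qeq (lin r) (cst (r - a))"
    using assms unfolding is_centre_def by blast
  then show ?thesis
  proof cases
    case 1
    then have "qeq (lin_cut a) (omega_val v a (lin_cut a) [:-r, 1:]) (1, v 1)"
      using omega_val_linear(1)[OF lin_cut_Qcuts[of a], of a r] qeq_refl by simp
    moreover have "Qeq (lin r) (lin_monom a 1 1)"
      unfolding 1 monom_lin by (rule Qeq_refl)
    ultimately show ?thesis using one_neq_zero by blast
  next
    case 2
    then have "qeq (lin_cut a) (omega_val v a (lin_cut a) [:-r, 1:]) (1, v 1)"
      using omega_val_lin_cut_linear_eq_x by simp
    moreover have "Qeq (lin r) (lin_monom a 1 1)"
      unfolding monom_lin by (rule 2(3))
    ultimately show ?thesis using one_neq_zero by blast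
  next
    case 3
    then have "qeq (lin_cut a) (omega_val v a (lin_cut a) [:-r, 1:]) (0, v (r - a))"
      using omega_val_lin_cut_linear_eq_const by simp
    moreover have "Qeq (lin r) (lin_monom a 0 (r - a))"
      unfolding monom_cst by (rule 3(3))
    ultimately show ?thesis using 3(1) by (meson right_minus_eq)
  qed
qed

lemma is_centre_pfr_equiv_monom:
  assumes "is_centre a" "F \<noteq> 0"
  shows "\<exists>n c. c \<noteq> 0 \<and> Qeq (pfr F) (lin_monom a n c) \<and>
    qeq (lin_cut a) (omega_val v a (lin_cut a) F) (n, v c)"
  using assms(2)
proof (induction F rule: poly_linear_factor_induct)
  case (const c)
  then have "Qeq (pfr [:c:]) (lin_monom a 0 c) \<and> qeq (lin_cut a) (omega_val v a (lin_cut a) [:c:]) (0, v c)"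
    using Qeq_refl qeq_refl omega_val_const[OF lin_cut_Qcuts] by (simp add: lin_monom_def cst_eq_pfr)
  then show ?case using const by blast
next
  case (linear r)
  then show ?case
    using is_centre_lin_equiv_monom[OF assms(1)] unfolding lin_def by blast
next
  case (mult p q)
  let ?d = "lin_cut a"
  note d = lin_cut_Qcuts[of a]
  obtain n c m e where nc: "c \<noteq> 0" "Qeq (pfr p) (lin_monom a n c)" "qeq ?d (omega_val v a ?d p) (n, v c)"
    and me: "e \<noteq> 0" "Qeq (pfr q) (lin_monom a m e)" "qeq ?d (omega_val v a ?d q) (m, v e)"
    using mult.IH by blast
  have "Qeq (pfr (p * q)) (lin_monom a (n + m) (c * e))"
    unfolding pfr_mult lin_monom_mult[symmetric] using Qeq_mult nc me by blast
  moreover have "qeq ?d (omega_val v a ?d (p * q)) (n + m, v (c * e))"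
  proof -
    have "padd (n, v c) (m, v e) = (n + m, v (c * e))"
      unfolding padd_def using nc me by (simp add: v_mult)
    then show ?thesis
      using omega_val_mult[OF d mult.hyps] qeq_padd[OF d nc(3) me(3)] qeq_trans[OF d] by metis
  qed
  moreover have "c * e \<noteq> 0" using nc me by simp
  ultimately show ?case by blast
qed

theorem is_centre_imp_eq_omega:
  assumes "is_centre a"
  shows "Q = omega v a (lin_cut a)"
proof (intro ext)
  fix x y :: "'k poly fract"
  let ?d = "lin_cut a"
  note d = lin_cut_Qcuts[of a]
  show "Q x y = omega v a ?d x y"
  proof (cases "x = 0 \<or> y = 0")
    case True
    then show ?thesis using Q_zero Q_zero_imp unfolding omega_def by auto
  next
    case False
    then obtain f1 g1 f2 g2 where x: "x = Fract f1 g1" "f1 \<noteq> 0" "g1 \<noteq> 0"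
      and y: "y = Fract f2 g2" "f2 \<noteq> 0" "g2 \<noteq> 0"
      by (meson Fract_nonzero_cases)
    obtain n c m e where
      nc: "c \<noteq> 0" "Qeq (pfr (f1 * g2)) (lin_monom a n c)" "qeq ?d (omega_val v a ?d (f1 * g2)) (n, v c)"
      and me: "e \<noteq> 0" "Qeq (pfr (f2 * g1)) (lin_monom a m e)" "qeq ?d (omega_val v a ?d (f2 * g1)) (m, v e)"
      using is_centre_pfr_equiv_monom[OF assms, of "f1 * g2"] is_centre_pfr_equiv_monom[OF assms, of "f2 * g1"]
        x y by auto
    have "Q x y \<longleftrightarrow> Q (pfr (f1 * g2)) (pfr (f2 * g1))"
      using Q_Fract_iff x y by simp
    also have "\<dots> \<longleftrightarrow> Q (lin_monom a n c) (lin_monom a m e)"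
      using Q_cong nc me by blast
    also have "\<dots> \<longleftrightarrow> qle ?d (n, v c) (m, v e)"
      using Q_lin_monom_iff nc me by blast
    also have "\<dots> \<longleftrightarrow> qle ?d (omega_val v a ?d (f1 * g2)) (omega_val v a ?d (f2 * g1))"
      using qle_cong[OF d] nc me qeq_sym by blast
    also have "\<dots> \<longleftrightarrow> qle ?d (padd (omega_val v a ?d f1) (omega_val v a ?d g2))
        (padd (omega_val v a ?d f2) (omega_val v a ?d g1))"
      using qle_cong[OF d omega_val_mult[OF d] omega_val_mult[OF d]] x y by simp
    also have "\<dots> \<longleftrightarrow> omega v a ?d x y"
      using omega_Fract_iff[OF d] x y by simp
    finally show ?thesis .
  qed
qed

end

section \<open>The extreme valuations omega_{a,-\<infinity>} and omega_{a,\<infinity>-}\<close>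

context alg_closed_valued_field
begin

lemma val_classI: "is_val_class v P \<Longrightarrow> val_class v P"
  unfolding val_class_def val_class_axioms_def using alg_closed_valued_field_axioms by blast

lemma omega_pfr_cst_iff:
  assumes "\<delta> \<in> Qcuts \<Gamma>" "f \<noteq> 0" "c \<noteq> 0"
  shows "omega v a \<delta> (pfr f) (cst c) \<longleftrightarrow> qle \<delta> (omega_val v a \<delta> f) (0, v c)"
    "omega v a \<delta> (cst c) (pfr f) \<longleftrightarrow> qle \<delta> (0, v c) (omega_val v a \<delta> f)"
  unfolding pfr_def cst_def
  using omega_Fract_iff[OF assms(1), of f 1 "[:c:]" 1 a] omega_Fract_iff[OF assms(1), of "[:c:]" 1 f 1 a]
    assms omega_val_one[OF assms(1)] omega_val_const[OF assms(1) assms(3)]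
  by (simp_all add: qle_padd_right)

lemma qle_minf_lin_cst: "c \<noteq> 0 \<Longrightarrow> qle (qc_minf \<Gamma>) (1, 0) (0, v c)"
  unfolding qle_def qc_minf_def using valgroupI by (auto simp: xle_pos intro!: bexI[of _ "v c"])

lemma not_qle_minf_cst_lin: "\<not> qle (qc_minf \<Gamma>) (0, \<beta>) (1, 0)"
  unfolding qle_def qc_minf_def by (simp add: xle_neg)

lemma qle_inftym_cst_lin: "c \<noteq> 0 \<Longrightarrow> qle (qc_inftym \<Gamma>) (0, v c) (1, 0)"
  unfolding qle_def qc_inftym_def using valgroupI by (auto simp: xle_neg intro!: bexI[of _ "v c"])

lemma not_qle_inftym_lin_cst: "\<not> qle (qc_inftym \<Gamma>) (1, 0) (0, \<beta>)"
  unfolding qle_def qc_inftym_def by (simp add: xle_pos)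

lemma omega_val_minf_lin: "omega_val v a (qc_minf \<Gamma>) [:-r, 1:] = (1, 0)"
  using omega_val_linear[OF qc_minf_Qcuts, of a r] not_qle_minf_cst_lin by (auto split: if_splits)

lemma omega_val_inftym_lin_centre: "omega_val v a (qc_inftym \<Gamma>) [:-a, 1:] = (1, 0)"
  using omega_val_linear(1)[OF qc_inftym_Qcuts, of a a] by simp

lemma omega_val_inftym_lin: "r \<noteq> a \<Longrightarrow> omega_val v a (qc_inftym \<Gamma>) [:-r, 1:] = (0, v (a - r))"
  using omega_val_linear[OF qc_inftym_Qcuts, of a r] not_qle_inftym_lin_cst by (auto split: if_splits)

lemma omega_minf_lin_cst: "c \<noteq> 0 \<Longrightarrow> omega v a (qc_minf \<Gamma>) (lin r) (cst c)"
  unfolding lin_def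
  using omega_pfr_cst_iff(1)[OF qc_minf_Qcuts] omega_val_minf_lin qle_minf_lin_cst by simp

lemma not_omega_minf_cst_lin: "c \<noteq> 0 \<Longrightarrow> \<not> omega v a (qc_minf \<Gamma>) (cst c) (lin r)"
  unfolding lin_def
  using omega_pfr_cst_iff(2)[OF qc_minf_Qcuts] omega_val_minf_lin not_qle_minf_cst_lin by simp

lemma not_omega_inftym_lin_cst: "c \<noteq> 0 \<Longrightarrow> \<not> omega v a (qc_inftym \<Gamma>) (lin a) (cst c)"
  unfolding lin_def
  using omega_pfr_cst_iff(1)[OF qc_inftym_Qcuts] omega_val_inftym_lin_centre not_qle_inftym_lin_cst
  by simp

text \<open>Separation on the x - r suffices, as every polynomial splits into linear factors.\<close>
lemma vle_if_lin_separated: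
  assumes P: "is_val_class v P" and Q: "is_val_class v Q"
    and lin: "\<And>r. \<exists>c. c \<noteq> 0 \<and> P (lin r) (cst c) \<and> Q (cst c) (lin r)"
  shows "vle v P Q"
proof -
  interpret p: val_class v P by (rule val_classI[OF P])
  interpret q: val_class v Q by (rule val_classI[OF Q])
  have "\<exists>c. c \<noteq> 0 \<and> P (pfr f) (cst c) \<and> Q (cst c) (pfr f)" if "f \<noteq> 0" for f
    using that
  proof (induction f rule: poly_linear_factor_induct)
    case (const c)
    then show ?case using p.Q_refl q.Q_refl by (auto simp: cst_eq_pfr)
  next
    case (linear r)
    then show ?case using lin[of r] unfolding lin_def by blast
  next
    case (mult f g)
    then obtain c d where "c \<noteq> 0" "P (pfr f) (cst c)" "Q (cst c) (pfr f)"
      "d \<noteq> 0" "P (pfr g) (cst d)" "Q (cst d) (pfr g)" by blast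
    then show ?case using p.Q_mult_mono q.Q_mult_mono
      by (intro exI[of _ "c * d"]) (auto simp: pfr_mult cst_mult[symmetric])
  qed
  then show ?thesis unfolding vle_def by blast
qed

end

context val_class
begin

lemma Qeq_lin_if_Qlt_cst:
  assumes "Qlt (lin a) (cst (a - r))"
  shows "Qeq (lin r) (lin a)"
  using Qeq_add_dominant[OF assms] lin_eq_add_cst[of r a] by simp

lemma Qeq_lin_if_cst_Qlt:
  assumes "Qlt (cst (a - r)) (lin a)"
  shows "Qeq (lin r) (cst (r - a))"
proof -
  have "Qeq (lin r) (cst (a - r))"
    using Qeq_add_dominant'[OF assms] lin_eq_add_cst[of r a] by simp
  then show ?thesis
    using Qeq_cst_diff_commute[of a r] Qeq_trans Qeq_sym by blast
qed

lemma eq_omega_minf_if_lin_below: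
  assumes below: "\<forall>c. c \<noteq> 0 \<longrightarrow> \<not> Q (cst c) (lin a)"
  shows "Q = omega v a (qc_minf \<Gamma>)"
proof -
  have "is_centre a"
    unfolding is_centre_def
  proof (intro allI impI disjI1 conjI)
    fix r assume "r \<noteq> a"
    then have "r - a \<noteq> 0" "a - r \<noteq> 0" by auto
    then show "Q (lin a) (cst (r - a))" and "Qeq (lin r) (lin a)"
      using below Q_total[of "lin a" "cst (r - a)"] Qeq_lin_if_Qlt_cst[of a r] unfolding Qlt_def by auto
  qed
  from is_centre_imp_eq_omega[OF this] show ?thesis
    unfolding lin_cut_eq_qc_minf[OF below] .
qed

lemma eq_omega_inftym_if_lin_above:
  assumes above: "\<forall>c. c \<noteq> 0 \<longrightarrow> \<not> Q (lin b) (cst c)"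
  shows "Q = omega v b (qc_inftym \<Gamma>)"
proof -
  have "is_centre b"
    unfolding is_centre_def
  proof (intro allI impI disjI2 conjI)
    fix r assume "r \<noteq> b"
    then have "r - b \<noteq> 0" "b - r \<noteq> 0" by auto
    then show "Q (cst (r - b)) (lin b)" and "Qeq (lin r) (cst (r - b))"
      using above Q_total[of "lin b" "cst (r - b)"] Qeq_lin_if_cst_Qlt[of b r] unfolding Qlt_def by auto
  qed
  from is_centre_imp_eq_omega[OF this] show ?thesis
    unfolding lin_cut_eq_qc_inftym[OF above] .
qed

lemma is_centre_if_lin_max:
  assumes max: "\<forall>r. Q (lin r) (lin b)"
  shows "is_centre b"
  unfolding is_centre_def
proof (intro allI impI)
  fix r
  show "(Q (lin b) (cst (r - b)) \<and> Qeq (lin r) (lin b)) \<or> (Q (cst (r - b)) (lin b) \<and> Qeq (lin r) (cst (r - b)))"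
  proof (cases "Q (lin b) (cst (r - b))")
    case True
    then have "Q (lin b) (lin r)"
      using Q_add[OF Q_refl] lin_eq_add_cst[of r b] Qeq_cst_diff_commute[of r b] Q_trans
      unfolding Qeq_def by metis
    then show ?thesis using True max unfolding Qeq_def by blast
  next
    case False
    then have "Qlt (cst (b - r)) (lin b)"
      using Qeq_cst_diff_commute[of r b] Q_Qlt_trans unfolding Qlt_def Qeq_def by blast
    then show ?thesis using Qeq_lin_if_cst_Qlt Q_total False by blast
  qed
qed

lemma is_centre_if_vle_omega_inftym:
  assumes le: "vle v Q (omega v a (qc_inftym \<Gamma>))" and ne: "Q \<noteq> omega v a (qc_inftym \<Gamma>)"
  shows "is_centre a"
proof -
  let ?W = "omega v a (qc_inftym \<Gamma>)"
  \<comment> \<open>Q(x - r) \<le> v(a - r) for r \<noteq> a, as omega_{a,\<infinity>-}(x - r) = v(a - r)\<close>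
  have lin_le: "Q (lin r) (cst (r - a))" if "r \<noteq> a" for r
  proof -
    obtain c where c: "c \<noteq> 0" "Q (lin r) (cst c)" "?W (cst c) (lin r)"
      using le ne unfolding vle_def lin_def by (meson pCons_eq_0_iff one_neq_zero)
    have "qle (qc_inftym \<Gamma>) (0, v c) (0, v (a - r))"
      using c(3) omega_pfr_cst_iff(2)[OF qc_inftym_Qcuts _ c(1), of "[:-r, 1:]" a]
        omega_val_inftym_lin[OF that] unfolding lin_def by simp
    then have "Q (cst c) (cst (r - a))"
      using Q_cst_iff c that v_diff_commute[of a r] by (simp add: qle_same_fst)
    then show ?thesis using c Q_trans by blast
  qed
  show ?thesis
    unfolding is_centre_def
  proof (intro allI impI)
    fix r assume ra: "r \<noteq> a"
    show "(Q (lin a) (cst (r - a)) \<and> Qeq (lin r) (lin a)) \<or> (Q (cst (r - a)) (lin a) \<and> Qeq (lin r) (cst (r - a)))"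
    proof (cases "Q (lin a) (cst (r - a))")
      case True
      have "Q (lin a) (lin r)"
        using True Q_add[OF Q_refl] lin_eq_add_cst[of r a] Qeq_cst_diff_commute[of r a] Q_trans
        unfolding Qeq_def by metis
      moreover have "Q (lin r) (lin a)"
        using Qeq_lin_if_Qlt_cst lin_le[OF ra] Qeq_cst_diff_commute[of r a] Q_trans
        unfolding Qlt_def Qeq_def by blast
      ultimately show ?thesis using True unfolding Qeq_def by blast
    next
      case False
      then have "Qlt (cst (a - r)) (lin a)"
        using Qeq_cst_diff_commute[of r a] Q_Qlt_trans unfolding Qlt_def Qeq_def by blast
      then show ?thesis using Qeq_lin_if_cst_Qlt Q_total False by blast
    qed
  qed
qed

end

context alg_closed_valued_field
begin

lemma omega_minf_indep: "omega v a (qc_minf \<Gamma>) = omega v b (qc_minf \<Gamma>)"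
proof -
  interpret val_class v "omega v b (qc_minf \<Gamma>)"
    by (rule val_classI[OF omega_val_class[OF qc_minf_Qcuts]])
  show ?thesis
    using eq_omega_minf_if_lin_below[of a] not_omega_minf_cst_lin by simp
qed

lemma omega_minf_vle:
  assumes P: "is_val_class v P"
  shows "vle v (omega v a (qc_minf \<Gamma>)) P"
proof -
  interpret p: val_class v P by (rule val_classI[OF P])
  show ?thesis
  proof (cases "\<forall>c. c \<noteq> 0 \<longrightarrow> \<not> P (cst c) (lin a)")
    case True
    then show ?thesis unfolding vle_def using p.eq_omega_minf_if_lin_below by simp
  next
    case False
    then obtain c0 where c0: "c0 \<noteq> 0" "P (cst c0) (lin a)" by blast
    \<comment> \<open>P(x - r) \<ge> min(v c0, v(a - r)), while omega_{a,-\<infinity>}(x - r) lies below every constant\<close>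
    have "\<exists>c. c \<noteq> 0 \<and> P (cst c) (lin r)" for r
    proof (cases "r = a")
      case False
      define d where "d = (if v c0 \<le> v (a - r) then c0 else a - r)"
      have "d \<noteq> 0" "P (cst d) (cst (a - r))" "P (cst d) (cst c0)"
        unfolding d_def using p.Q_cst_iff c0 False p.Q_refl by auto
      then have "P (cst d) (lin r)"
        using p.Q_add p.Q_trans c0 lin_eq_add_cst[of r a] by metis
      then show ?thesis using \<open>d \<noteq> 0\<close> by blast
    qed (use c0 in blast)
    then show ?thesis
      using vle_if_lin_separated[OF omega_val_class[OF qc_minf_Qcuts] P] omega_minf_lin_cst by blast
  qed
qed

lemma omega_vle_omega_inftym:
  assumes d: "\<delta> \<in> Qcuts \<Gamma>"
  shows "vle v (omega v a \<delta>) (omega v a (qc_inftym \<Gamma>))"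
proof (cases "snd \<delta> = {}")
  case True
  then have "\<delta> = qc_inftym \<Gamma>"
    using Qcuts_Un[OF d] unfolding qc_inftym_def by (metis prod.collapse sup_bot.right_neutral)
  then show ?thesis unfolding vle_def by simp
next
  case False
  then obtain \<rho> where "\<rho> \<in> snd \<delta>" by blast
  moreover from this have "\<rho> \<in> \<Gamma>" using Qcuts_Un[OF d] by auto
  ultimately obtain c\<rho> where c\<rho>: "c\<rho> \<noteq> 0" "v c\<rho> \<in> snd \<delta>"
    by (auto elim: valgroupE)
  have "\<exists>c. c \<noteq> 0 \<and> omega v a \<delta> (lin r) (cst c) \<and> omega v a (qc_inftym \<Gamma>) (cst c) (lin r)" for r
  proof (cases "r = a")
    case True
    have "qle \<delta> (1, 0) (0, v c\<rho>)"
      unfolding qle_def using c\<rho> by (auto simp: xle_pos)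
    then have "omega v a \<delta> (lin a) (cst c\<rho>)"
      using omega_pfr_cst_iff(1)[OF d _ c\<rho>(1)] omega_val_linear(1)[OF d, of a a] unfolding lin_def by simp
    moreover have "omega v a (qc_inftym \<Gamma>) (cst c\<rho>) (lin a)"
      using omega_pfr_cst_iff(2)[OF qc_inftym_Qcuts _ c\<rho>(1)] omega_val_inftym_lin_centre
        qle_inftym_cst_lin[OF c\<rho>(1)] unfolding lin_def by simp
    ultimately show ?thesis using True c\<rho> by blast
  next
    case False
    then have ar: "a - r \<noteq> 0" by simp
    have "omega v a \<delta> (lin r) (cst (a - r))"
      using omega_pfr_cst_iff(1)[OF d _ ar] omega_val_linear(3)[OF d, of a r] False unfolding lin_def by simp
    moreover have "omega v a (qc_inftym \<Gamma>) (cst (a - r)) (lin r)"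
      using omega_pfr_cst_iff(2)[OF qc_inftym_Qcuts _ ar] omega_val_inftym_lin[OF False] qle_refl
      unfolding lin_def by simp
    ultimately show ?thesis using ar by blast
  qed
  then show ?thesis
    using vle_if_lin_separated[OF omega_val_class[OF d] omega_val_class[OF qc_inftym_Qcuts]] by blast
qed

theorem omega_inftym_maximal: "is_maximal v (omega v a (qc_inftym \<Gamma>))"
  unfolding is_maximal_def
proof (intro conjI allI impI)
  show "is_val_class v (omega v a (qc_inftym \<Gamma>))"
    using omega_val_class[OF qc_inftym_Qcuts] .
  fix Q assume "is_val_class v Q" "vle v (omega v a (qc_inftym \<Gamma>)) Q"
  then show "Q = omega v a (qc_inftym \<Gamma>)"
    using not_omega_inftym_lin_cst unfolding vle_def lin_def by (metis pCons_eq_0_iff zero_neq_one)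
qed

theorem omega_interval:
  "{Q. is_val_class v Q \<and> vle v (omega v a (qc_minf \<Gamma>)) Q \<and> vle v Q (omega v a (qc_inftym \<Gamma>))}
    = {omega v a \<delta> | \<delta>. \<delta> \<in> Qcuts \<Gamma>}"
proof (intro equalityI subsetI)
  fix Q assume "Q \<in> {Q. is_val_class v Q \<and> vle v (omega v a (qc_minf \<Gamma>)) Q \<and>
      vle v Q (omega v a (qc_inftym \<Gamma>))}"
  then have Q: "is_val_class v Q" and le: "vle v Q (omega v a (qc_inftym \<Gamma>))" by auto
  interpret q: val_class v Q by (rule val_classI[OF Q])
  show "Q \<in> {omega v a \<delta> | \<delta>. \<delta> \<in> Qcuts \<Gamma>}"
  proof (cases "Q = omega v a (qc_inftym \<Gamma>)")
    case False
    then have "Q = omega v a (q.lin_cut a)"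
      using q.is_centre_imp_eq_omega q.is_centre_if_vle_omega_inftym[OF le] by blast
    then show ?thesis using q.lin_cut_Qcuts by blast
  qed (use qc_inftym_Qcuts in blast)
qed (use omega_val_class omega_minf_vle omega_vle_omega_inftym in blast)

end

section \<open>Nests of balls and omega_B\<close>

definition eval_at :: "'g::ab_group_add \<Rightarrow> nat \<times> 'g \<Rightarrow> 'g" where
  "eval_at \<gamma> s = gmul (fst s) \<gamma> + snd s"

lemma eval_at_padd: "eval_at \<gamma> (padd s t) = eval_at \<gamma> s + eval_at \<gamma> t"
  unfolding eval_at_def padd_def by (simp add: gmul_add_left algebra_simps)

lemma qle_qc_elem_iff:
  fixes \<gamma> :: "'g::linordered_ab_group_add"
  assumes "\<gamma> \<in> G"
  shows "qle (qc_elem G \<gamma>) s t \<longleftrightarrow> eval_at \<gamma> s \<le> eval_at \<gamma> t"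
proof -
  have pos: "xle (qc_elem G \<gamma>) (int k) \<beta> \<longleftrightarrow> gmul k \<gamma> \<le> \<beta>"
    and neg: "xle (qc_elem G \<gamma>) (- int k) \<beta> \<longleftrightarrow> - \<beta> \<le> gmul k \<gamma>" if "k > 0" for k \<beta>
    using that assms gmul_mono unfolding qc_elem_def
    by (subst xle_pos xle_neg; auto intro: order_trans)+
  obtain n \<beta> m \<beta>' where st: "s = (n, \<beta>)" "t = (m, \<beta>')" by (cases s, cases t)
  consider "n = m" | k where "n = m + k" "k > 0" | k where "m = n + k" "k > 0"
    by (metis less_imp_add_positive nat_neq_iff)
  then show ?thesis
  proof cases
    case 1
    then show ?thesis unfolding eval_at_def st by (simp add: qle_same_fst)
  next
    case (2 k)
    then show ?thesis
      unfolding qle_def eval_at_def st using pos[OF 2(2)] by (simp add: gmul_add_left algebra_simps le_diff_eq)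
  next
    case (3 k)
    then show ?thesis
      unfolding qle_def eval_at_def st using neg[OF 3(2)] by (simp add: gmul_add_left algebra_simps le_diff_eq)
  qed
qed

lemma eval_at_eq_if_qeq: "\<gamma> \<in> G \<Longrightarrow> qeq (qc_elem G \<gamma>) s t \<Longrightarrow> eval_at \<gamma> s = eval_at \<gamma> t"
  unfolding qeq_def using qle_qc_elem_iff by (metis antisym)

context alg_closed_valued_field
begin

lemma wval_eq_eval_omega_val:
  assumes g: "\<gamma> \<in> \<Gamma>" and f: "f \<noteq> 0"
  shows "wval v a \<gamma> f = eval_at \<gamma> (omega_val v a (qc_elem \<Gamma> \<gamma>) f)"
proof -
  let ?S = "{v (tcoeff a f n) + gmul n \<gamma> | n. tcoeff a f n \<noteq> 0}"
  have S: "?S = eval_at \<gamma> ` coeff_vals (shift a f)"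
    unfolding coeff_vals_def eval_at_def tcoeff_def by (auto simp: add.commute image_iff)
  note m = omega_val_min[OF qc_elem_Qcuts[OF g] f, of a]
  show ?thesis
    unfolding wval_def S using m coeff_vals_finite qle_qc_elem_iff[OF g] by (intro Min_eqI) auto
qed

lemma wval_valgroup: "\<gamma> \<in> \<Gamma> \<Longrightarrow> f \<noteq> 0 \<Longrightarrow> wval v a \<gamma> f \<in> \<Gamma>"
  using wval_eq_eval_omega_val omega_val_valgroup[OF qc_elem_Qcuts] valgroup_add valgroup_gmul
  unfolding eval_at_def by simp

lemma wval_mult:
  assumes "\<gamma> \<in> \<Gamma>" "f \<noteq> 0" "g \<noteq> 0"
  shows "wval v a \<gamma> (f * g) = wval v a \<gamma> f + wval v a \<gamma> g"
  using wval_eq_eval_omega_val[OF assms(1)] assms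
    eval_at_eq_if_qeq[OF assms(1) omega_val_mult[OF qc_elem_Qcuts[OF assms(1)] assms(2,3)]]
  by (simp add: eval_at_padd)

lemma wval_add:
  assumes "\<gamma> \<in> \<Gamma>" "f \<noteq> 0" "g \<noteq> 0" "f + g \<noteq> 0"
  shows "min (wval v a \<gamma> f) (wval v a \<gamma> g) \<le> wval v a \<gamma> (f + g)"
  using wval_eq_eval_omega_val[OF assms(1)] assms omega_val_add[OF qc_elem_Qcuts[OF assms(1)] assms(2-4), of a]
    qle_qc_elem_iff[OF assms(1)]
  by (auto simp: min_def)

lemma wval_const: "\<gamma> \<in> \<Gamma> \<Longrightarrow> c \<noteq> 0 \<Longrightarrow> wval v a \<gamma> [:c:] = v c"
  using wval_eq_eval_omega_val omega_val_const[OF qc_elem_Qcuts] unfolding eval_at_def by simp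

lemma wval_linear:
  assumes "\<gamma> \<in> \<Gamma>"
  shows "wval v a \<gamma> [:-r, 1:] = (if r = a then \<gamma> else min \<gamma> (v (a - r)))"
proof -
  let ?s = "omega_val v a (qc_elem \<Gamma> \<gamma>) [:-r, 1:]"
  have w: "wval v a \<gamma> [:-r, 1:] = eval_at \<gamma> ?s"
    using wval_eq_eval_omega_val[OF assms] by simp
  have e1: "eval_at \<gamma> (1, 0) = \<gamma>" and e0: "eval_at \<gamma> (0, \<beta>) = \<beta>" for \<beta>
    unfolding eval_at_def by simp_all
  note L = omega_val_linear[OF qc_elem_Qcuts[OF assms], of a r]
  show ?thesis
  proof (cases "r = a")
    case True
    then show ?thesis using L(1) w e1 by simp
  next
    case False
    have "eval_at \<gamma> ?s \<le> \<gamma>" "eval_at \<gamma> ?s \<le> v (a - r)"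
      using L(2,3) False qle_qc_elem_iff[OF assms] e1 e0 by metis+
    moreover have "eval_at \<gamma> ?s = \<gamma> \<or> eval_at \<gamma> ?s = v (a - r)"
      using L(1) False e1 e0 by auto
    ultimately show ?thesis using w False by (auto simp: min_def)
  qed
qed

end

lemma cball_centre: "a \<in> cball v a \<gamma>"
  unfolding cball_def by simp

context alg_closed_valued_field
begin

lemma wval_linear_outside:
  assumes "\<gamma> \<in> \<Gamma>" "r \<notin> cball v b \<gamma>"
  shows "wval v b \<gamma> [:-r, 1:] = v (b - r)"
proof -
  have "r \<noteq> b" "v (r - b) < \<gamma>"
    using assms(2) unfolding cball_def by auto
  then show ?thesis
    using wval_linear[OF assms(1), of b r] v_diff_commute[of r b] by simp
qed

lemma wval_linear_inner_ball:
  assumes "\<gamma> \<in> \<Gamma>" "\<gamma>0 \<in> \<Gamma>" "cball v b \<gamma> \<subseteq> cball v b0 \<gamma>0" "r \<notin> cball v b0 \<gamma>0"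
  shows "wval v b \<gamma> [:-r, 1:] = wval v b0 \<gamma>0 [:-r, 1:]"
proof -
  have rb0: "b0 - r \<noteq> 0" "v (b0 - r) < \<gamma>0"
    using assms(4) v_diff_commute[of r b0] unfolding cball_def by auto
  have "b = b0 \<or> \<gamma>0 \<le> v (b - b0)"
    using assms(3) cball_centre[of b v \<gamma>] unfolding cball_def by auto
  \<comment> \<open>b - r = (b - b0) + (b0 - r) with the second summand strictly dominant\<close>
  then have "v (b - r) = v (b0 - r)"
    using v_add_eq_right[of "b - b0" "b0 - r"] rb0 by (cases "b = b0") auto
  moreover have "r \<notin> cball v b \<gamma>" using assms(3,4) by blast
  ultimately show ?thesis
    using wval_linear_outside assms by simp
qed

lemma wval_linear_outer_ball:
  assumes "\<gamma> \<in> \<Gamma>" "\<gamma>0 \<in> \<Gamma>" "cball v b0 \<gamma>0 \<subseteq> cball v b \<gamma>" "r \<notin> cball v b0 \<gamma>0"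
  shows "wval v b \<gamma> [:-r, 1:] \<le> wval v b0 \<gamma>0 [:-r, 1:]"
proof -
  have w0: "wval v b0 \<gamma>0 [:-r, 1:] = v (b0 - r)" and rb0: "b0 - r \<noteq> 0"
    using wval_linear_outside[OF assms(2,4)] assms(4) unfolding cball_def by auto
  have b0b: "b0 = b \<or> \<gamma> \<le> v (b0 - b)"
    using assms(3) cball_centre[of b0 v \<gamma>0] unfolding cball_def by auto
  show ?thesis
  proof (cases "r = b")
    case True
    then show ?thesis
      using wval_linear[OF assms(1), of b r] w0 b0b rb0 by auto
  next
    case False
    then have w: "wval v b \<gamma> [:-r, 1:] = min \<gamma> (v (b - r))"
      using wval_linear[OF assms(1), of b r] by simp
    show ?thesis
    proof (cases "b0 = b")
      case False
      then have "min \<gamma> (v (b - r)) \<le> v (b0 - b)"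
        using b0b by (simp add: min.coboundedI1)
      then have "min \<gamma> (v (b - r)) \<le> v ((b0 - b) + (b - r))"
        using False \<open>r \<noteq> b\<close> rb0 v_ultra_bound[of "b0 - b" "b - r" "min \<gamma> (v (b - r))"] by simp
      then show ?thesis using w w0 by simp
    qed (use w w0 in simp)
  qed
qed

lemma nest_chain:
  assumes "is_nest v N" "p \<in> N" "q \<in> N"
  shows "cball v (fst p) (snd p) \<subseteq> cball v (fst q) (snd q) \<or> cball v (fst q) (snd q) \<subseteq> cball v (fst p) (snd p)"
  using assms unfolding is_nest_def by (cases "p = q") auto

lemma nest_radius_valgroup: "is_nest v N \<Longrightarrow> (b, \<gamma>) \<in> N \<Longrightarrow> \<gamma> \<in> \<Gamma>"
  unfolding is_nest_def by auto

lemma nest_nonempty: "is_nest v N \<Longrightarrow> N \<noteq> {}"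
  unfolding is_nest_def by auto

lemma nest_avoids: "is_nest v N \<Longrightarrow> \<exists>p\<in>N. c \<notin> cball v (fst p) (snd p)"
  unfolding is_nest_def by auto

lemma nest_common_subball:
  assumes "is_nest v N" "p \<in> N" "q \<in> N"
  obtains s where "s \<in> N" "cball v (fst s) (snd s) \<subseteq> cball v (fst p) (snd p)"
    "cball v (fst s) (snd s) \<subseteq> cball v (fst q) (snd q)"
  using nest_chain[OF assms] assms(2,3) by blast

text \<open>B stabilises F along the nest N: omega_{a_i,gamma_i}(F) is constant on the balls inside B
  and not larger on those containing B, so the maximum defining omegaB(F) is attained at B.\<close>
definition stabilises :: "('k \<times> 'g) set \<Rightarrow> 'k \<times> 'g \<Rightarrow> 'k poly \<Rightarrow> bool" where
  "stabilises N B F \<longleftrightarrow> B \<in> N \<and> (\<forall>(b, \<gamma>)\<in>N.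
     (cball v b \<gamma> \<subseteq> cball v (fst B) (snd B) \<longrightarrow> wval v b \<gamma> F = wval v (fst B) (snd B) F) \<and>
     (cball v (fst B) (snd B) \<subseteq> cball v b \<gamma> \<longrightarrow> wval v b \<gamma> F \<le> wval v (fst B) (snd B) F))"

lemma stabilisesD:
  assumes "stabilises N B F" "(b, \<gamma>) \<in> N"
  shows "cball v b \<gamma> \<subseteq> cball v (fst B) (snd B) \<Longrightarrow> wval v b \<gamma> F = wval v (fst B) (snd B) F"
    and "cball v (fst B) (snd B) \<subseteq> cball v b \<gamma> \<Longrightarrow> wval v b \<gamma> F \<le> wval v (fst B) (snd B) F"
  using assms unfolding stabilises_def by fast+

lemma stabilises_le:
  assumes N: "is_nest v N" and s: "stabilises N B F" and p: "(b, \<gamma>) \<in> N"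
  shows "wval v b \<gamma> F \<le> wval v (fst B) (snd B) F"
proof -
  have "B \<in> N" using s unfolding stabilises_def by blast
  then consider "cball v b \<gamma> \<subseteq> cball v (fst B) (snd B)" | "cball v (fst B) (snd B) \<subseteq> cball v b \<gamma>"
    using nest_chain[OF N p] by fastforce
  then show ?thesis
    using stabilisesD[OF s p] by cases auto
qed

lemma stabilises_subball:
  assumes N: "is_nest v N" and s: "stabilises N B F"
    and p: "p \<in> N" "cball v (fst p) (snd p) \<subseteq> cball v (fst B) (snd B)"
  shows "stabilises N p F"
proof -
  have e: "wval v (fst p) (snd p) F = wval v (fst B) (snd B) F"
    using stabilisesD(1)[OF s, of "fst p" "snd p"] p by simp
  have "(cball v b \<gamma> \<subseteq> cball v (fst p) (snd p) \<longrightarrow> wval v b \<gamma> F = wval v (fst p) (snd p) F) \<and>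
      (cball v (fst p) (snd p) \<subseteq> cball v b \<gamma> \<longrightarrow> wval v b \<gamma> F \<le> wval v (fst p) (snd p) F)"
    if q: "(b, \<gamma>) \<in> N" for b \<gamma>
  proof (intro conjI impI)
    assume "cball v b \<gamma> \<subseteq> cball v (fst p) (snd p)"
    then have "cball v b \<gamma> \<subseteq> cball v (fst B) (snd B)"
      using p(2) by (rule subset_trans)
    then show "wval v b \<gamma> F = wval v (fst p) (snd p) F"
      using stabilisesD(1)[OF s q] e by simp
  next
    show "wval v b \<gamma> F \<le> wval v (fst p) (snd p) F"
      using stabilises_le[OF N s q] e by simp
  qed
  then show ?thesis
    unfolding stabilises_def using p(1) by fast
qed

lemma stabilises_const:
  assumes N: "is_nest v N" and "c \<noteq> 0" "B \<in> N"
  shows "stabilises N B [:c:]"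
proof -
  have "wval v b \<gamma> [:c:] = v c" if "(b, \<gamma>) \<in> N" for b \<gamma>
    using wval_const[OF nest_radius_valgroup[OF N that] assms(2)] .
  then show ?thesis
    unfolding stabilises_def using assms(3) by (cases B) auto
qed

lemma stabilises_linear:
  assumes N: "is_nest v N" and B: "B \<in> N" and r: "r \<notin> cball v (fst B) (snd B)"
  shows "stabilises N B [:-r, 1:]"
proof -
  obtain b0 \<gamma>0 where B0: "B = (b0, \<gamma>0)" by (cases B)
  have "\<gamma>0 \<in> \<Gamma>" using nest_radius_valgroup[OF N] B B0 by simp
  then show ?thesis
    unfolding stabilises_def
    using B B0 r nest_radius_valgroup[OF N] wval_linear_inner_ball wval_linear_outer_ball by auto
qed

lemma stabilises_mult:
  assumes N: "is_nest v N" and f: "f \<noteq> 0" and g: "g \<noteq> 0"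
    and sf: "stabilises N B1 f" and sg: "stabilises N B2 g"
  shows "\<exists>B. stabilises N B (f * g)"
proof -
  obtain B where B: "B \<in> N" "cball v (fst B) (snd B) \<subseteq> cball v (fst B1) (snd B1)"
    "cball v (fst B) (snd B) \<subseteq> cball v (fst B2) (snd B2)"
    using nest_common_subball[OF N conjunct1[OF sf[unfolded stabilises_def]]
      conjunct1[OF sg[unfolded stabilises_def]]] by blast
  have sf': "stabilises N B f" and sg': "stabilises N B g"
    using stabilises_subball[OF N sf B(1,2)] stabilises_subball[OF N sg B(1,3)] .
  have mult: "wval v b \<gamma> (f * g) = wval v b \<gamma> f + wval v b \<gamma> g" if "(b, \<gamma>) \<in> N" for b \<gamma>
    using wval_mult nest_radius_valgroup[OF N that] f g by blast
  have "(cball v b \<gamma> \<subseteq> cball v (fst B) (snd B) \<longrightarrow>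
          wval v b \<gamma> (f * g) = wval v (fst B) (snd B) (f * g)) \<and>
        (cball v (fst B) (snd B) \<subseteq> cball v b \<gamma> \<longrightarrow> wval v b \<gamma> (f * g) \<le> wval v (fst B) (snd B) (f * g))"
    if p: "(b, \<gamma>) \<in> N" for b \<gamma>
  proof (intro conjI impI)
    have B_mult: "wval v (fst B) (snd B) (f * g) = wval v (fst B) (snd B) f + wval v (fst B) (snd B) g"
      using mult[of "fst B" "snd B"] B(1) by simp
    {
      assume "cball v b \<gamma> \<subseteq> cball v (fst B) (snd B)"
      then show "wval v b \<gamma> (f * g) = wval v (fst B) (snd B) (f * g)"
        using mult[OF p] B_mult stabilisesD(1)[OF sf' p] stabilisesD(1)[OF sg' p] by simp
    next
      show "wval v b \<gamma> (f * g) \<le> wval v (fst B) (snd B) (f * g)"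
        using mult[OF p] B_mult stabilises_le[OF N sf' p] stabilises_le[OF N sg' p] by (simp add: add_mono)
    }
  qed
  then have "stabilises N B (f * g)"
    unfolding stabilises_def using B(1) by fast
  then show ?thesis by blast
qed

lemma stabilises_exists:
  assumes N: "is_nest v N" and "F \<noteq> 0"
  shows "\<exists>B. stabilises N B F"
  using assms(2)
proof (induction F rule: poly_linear_factor_induct)
  case (const c)
  then show ?case using stabilises_const[OF N] nest_nonempty[OF N] by blast
next
  case (linear r)
  then show ?case using stabilises_linear[OF N] nest_avoids[OF N, of r] by blast
next
  case (mult f g)
  then show ?case using stabilises_mult[OF N] by blast
qed

end

context alg_closed_valued_field
begin

lemma wnest_eq_stabilised:
  assumes N: "is_nest v N" and s: "stabilises N B F"
  shows "wnest v N F = wval v (fst B) (snd B) F"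
  unfolding wnest_def
proof (rule Greatest_equality)
  show "wval v (fst B) (snd B) F \<in> {wval v a \<gamma> F |a \<gamma>. (a, \<gamma>) \<in> N}"
    using s unfolding stabilises_def by force
  show "y \<le> wval v (fst B) (snd B) F" if "y \<in> {wval v a \<gamma> F |a \<gamma>. (a, \<gamma>) \<in> N}" for y
    using that stabilises_le[OF N s] by blast
qed

lemma wnest_ge:
  assumes N: "is_nest v N" and "(b, \<gamma>) \<in> N" "f \<noteq> 0"
  shows "wval v b \<gamma> f \<le> wnest v N f"
  using stabilises_exists[OF N assms(3)] stabilises_le[OF N _ assms(2)] wnest_eq_stabilised[OF N] by metis

lemma wnest_valgroup:
  assumes N: "is_nest v N" and "f \<noteq> 0"
  shows "wnest v N f \<in> \<Gamma>"
proof -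
  obtain B where s: "stabilises N B f"
    using stabilises_exists[OF N assms(2)] by blast
  then have "snd B \<in> \<Gamma>"
    using nest_radius_valgroup[OF N, of "fst B"] unfolding stabilises_def by simp
  then show ?thesis
    using wnest_eq_stabilised[OF N s] wval_valgroup assms(2) by simp
qed

lemma wnest_const:
  assumes N: "is_nest v N" and "c \<noteq> 0"
  shows "wnest v N [:c:] = v c"
proof -
  obtain b \<gamma> where B: "(b, \<gamma>) \<in> N"
    using nest_nonempty[OF N] by auto
  then show ?thesis
    using wnest_eq_stabilised[OF N stabilises_const[OF N assms(2) B]]
      wval_const[OF nest_radius_valgroup[OF N B] assms(2)] by simp
qed

lemma wnest_one: "is_nest v N \<Longrightarrow> wnest v N 1 = 0"
  using wnest_const[of N 1] by (simp add: one_pCons)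

lemma stabilises_common:
  assumes N: "is_nest v N" and "f \<noteq> 0" "g \<noteq> 0" "h \<noteq> 0"
  obtains B where "stabilises N B f" "stabilises N B g" "stabilises N B h"
proof -
  obtain B1 B2 B3 where s: "stabilises N B1 f" "stabilises N B2 g" "stabilises N B3 h"
    using stabilises_exists[OF N] assms by metis
  then obtain B' where B': "B' \<in> N" "cball v (fst B') (snd B') \<subseteq> cball v (fst B1) (snd B1)"
    "cball v (fst B') (snd B') \<subseteq> cball v (fst B2) (snd B2)"
    using nest_common_subball[OF N conjunct1[OF s(1)[unfolded stabilises_def]]
      conjunct1[OF s(2)[unfolded stabilises_def]]] by blast
  then obtain B where B: "B \<in> N" "cball v (fst B) (snd B) \<subseteq> cball v (fst B') (snd B')"
    "cball v (fst B) (snd B) \<subseteq> cball v (fst B3) (snd B3)"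
    using nest_common_subball[OF N B'(1) conjunct1[OF s(3)[unfolded stabilises_def]]] by blast
  have "stabilises N B f" "stabilises N B g" "stabilises N B h"
    using stabilises_subball[OF N s(1) B(1) subset_trans[OF B(2) B'(2)]]
      stabilises_subball[OF N s(2) B(1) subset_trans[OF B(2) B'(3)]]
      stabilises_subball[OF N s(3) B(1,3)] .
  then show ?thesis using that by blast
qed

lemma wnest_mult:
  assumes N: "is_nest v N" and f: "f \<noteq> 0" and g: "g \<noteq> 0"
  shows "wnest v N (f * g) = wnest v N f + wnest v N g"
proof -
  obtain B where "stabilises N B f" "stabilises N B g" "stabilises N B (f * g)"
    using stabilises_common[OF N f g, of "f * g"] f g by auto
  moreover have "snd B \<in> \<Gamma>"
    using calculation(1) nest_radius_valgroup[OF N, of "fst B"] unfolding stabilises_def by simp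
  ultimately show ?thesis
    using wnest_eq_stabilised[OF N] wval_mult f g by simp
qed

lemma wnest_add:
  assumes N: "is_nest v N" and f: "f \<noteq> 0" and g: "g \<noteq> 0" and fg: "f + g \<noteq> 0"
  shows "wnest v N f \<le> wnest v N (f + g) \<or> wnest v N g \<le> wnest v N (f + g)"
proof -
  obtain B where s: "stabilises N B f" "stabilises N B g" "stabilises N B (f + g)"
    using stabilises_common[OF N f g fg] by blast
  moreover have "snd B \<in> \<Gamma>"
    using s(1) nest_radius_valgroup[OF N, of "fst B"] unfolding stabilises_def by simp
  ultimately show ?thesis
    using wnest_eq_stabilised[OF N] wval_add[of "snd B" f g "fst B"] f g fg by (simp add: min_le_iff_disj)
qed

lemma omegaB_poly_value_function:
  assumes N: "is_nest v N"
  shows "poly_value_function (+) (\<le>) UNIV (wnest v N) v"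
  by unfold_locales (use wnest_mult[OF N] wnest_add[OF N] wnest_const[OF N] in auto)

lemma omegaB_val_class: "is_nest v N \<Longrightarrow> is_val_class v (omegaB v N)"
  unfolding omegaB_eq_fract_rel using poly_value_function.rel_val_class[OF omegaB_poly_value_function] .

lemma omegaB_Fract_iff:
  assumes "is_nest v N" "f1 \<noteq> 0" "g1 \<noteq> 0" "f2 \<noteq> 0" "g2 \<noteq> 0"
  shows "omegaB v N (Fract f1 g1) (Fract f2 g2) \<longleftrightarrow> wnest v N f1 + wnest v N g2 \<le> wnest v N f2 + wnest v N g1"
  unfolding omegaB_eq_fract_rel
  using poly_value_function.rel_Fract_iff[OF omegaB_poly_value_function[OF assms(1)]] assms(2-) by blast

lemma omegaB_pfr_cst_iff:
  assumes N: "is_nest v N" and "f \<noteq> 0" "c \<noteq> 0"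
  shows "omegaB v N (pfr f) (cst c) \<longleftrightarrow> wnest v N f \<le> v c"
  unfolding pfr_def cst_def
  using omegaB_Fract_iff[OF N, of f 1 "[:c:]" 1] assms wnest_one[OF N] wnest_const[OF N assms(3)] by simp

lemma wnest_linear_outside:
  assumes N: "is_nest v N" and "(b, \<gamma>) \<in> N" "r \<notin> cball v b \<gamma>"
  shows "wnest v N [:-r, 1:] = v (b - r)"
  using wnest_eq_stabilised[OF N stabilises_linear[OF N, of "(b, \<gamma>)"]] assms
    wval_linear_outside[OF nest_radius_valgroup[OF N assms(2)] assms(3)] by simp

theorem omegaB_ne_omega_inftym: "is_nest v N \<Longrightarrow> omegaB v N \<noteq> omega v a (qc_inftym \<Gamma>)"
proof
  assume N: "is_nest v N" and e: "omegaB v N = omega v a (qc_inftym \<Gamma>)"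
  obtain c where c: "c \<noteq> 0" "wnest v N [:-a, 1:] = v c"
    using wnest_valgroup[OF N] by (metis valgroupE pCons_eq_0_iff zero_neq_one)
  then have "omegaB v N (lin a) (cst c)"
    using omegaB_pfr_cst_iff[OF N _ c(1)] unfolding lin_def by simp
  then show False
    using e not_omega_inftym_lin_cst[OF c(1)] by simp
qed

end

context val_class
begin

lemma pfr_equiv_cst_if_lin_det:
  assumes N: "is_nest v N"
    and lin: "\<And>r. \<exists>c. c \<noteq> 0 \<and> Qeq (lin r) (cst c) \<and> wnest v N [:-r, 1:] = v c"
    and "F \<noteq> 0"
  shows "\<exists>c. c \<noteq> 0 \<and> Qeq (pfr F) (cst c) \<and> wnest v N F = v c"
  using assms(3)
proof (induction F rule: poly_linear_factor_induct)
  case (const c)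
  then show ?case using Qeq_refl wnest_const[OF N] by (auto simp: cst_eq_pfr)
next
  case (linear r)
  then show ?case using lin[of r] unfolding lin_def by blast
next
  case (mult f g)
  then obtain c d where "c \<noteq> 0" "Qeq (pfr f) (cst c)" "wnest v N f = v c"
    "d \<noteq> 0" "Qeq (pfr g) (cst d)" "wnest v N g = v d" by blast
  then show ?case
    using Qeq_mult wnest_mult[OF N mult.hyps] v_mult
    by (intro exI[of _ "c * d"]) (auto simp: pfr_mult cst_mult[symmetric])
qed

lemma eq_omegaB_if_lin_det:
  assumes N: "is_nest v N"
    and lin: "\<And>r. \<exists>c. c \<noteq> 0 \<and> Qeq (lin r) (cst c) \<and> wnest v N [:-r, 1:] = v c"
  shows "Q = omegaB v N"
proof (intro ext)
  fix x y :: "'k poly fract"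
  show "Q x y = omegaB v N x y"
  proof (cases "x = 0 \<or> y = 0")
    case True
    then show ?thesis using Q_zero Q_zero_imp unfolding omegaB_def by auto
  next
    case False
    then obtain f1 g1 f2 g2 where x: "x = Fract f1 g1" "f1 \<noteq> 0" "g1 \<noteq> 0"
      and y: "y = Fract f2 g2" "f2 \<noteq> 0" "g2 \<noteq> 0"
      by (meson Fract_nonzero_cases)
    obtain c d where c: "c \<noteq> 0" "Qeq (pfr (f1 * g2)) (cst c)" "wnest v N (f1 * g2) = v c"
      and d: "d \<noteq> 0" "Qeq (pfr (f2 * g1)) (cst d)" "wnest v N (f2 * g1) = v d"
      using pfr_equiv_cst_if_lin_det[OF N lin, of "f1 * g2"] pfr_equiv_cst_if_lin_det[OF N lin, of "f2 * g1"]
        x y by auto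
    have "Q x y \<longleftrightarrow> Q (pfr (f1 * g2)) (pfr (f2 * g1))"
      using Q_Fract_iff x y by simp
    also have "\<dots> \<longleftrightarrow> v c \<le> v d"
      using Q_cong c d Q_cst_iff by blast
    also have "\<dots> \<longleftrightarrow> wnest v N f1 + wnest v N g2 \<le> wnest v N f2 + wnest v N g1"
      using c d wnest_mult[OF N] x y by (simp add: add.commute)
    also have "\<dots> \<longleftrightarrow> omegaB v N x y"
      using omegaB_Fract_iff[OF N] x y by simp
    finally show ?thesis .
  qed
qed

end

context alg_closed_valued_field
begin

theorem omegaB_maximal:
  assumes N: "is_nest v N"
  shows "is_maximal v (omegaB v N)"
  unfolding is_maximal_def
proof (intro conjI allI impI)
  show "is_val_class v (omegaB v N)" using omegaB_val_class[OF N] .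
  fix Q assume Q: "is_val_class v Q" and le: "vle v (omegaB v N) Q"
  interpret q: val_class v Q by (rule val_classI[OF Q])
  show "Q = omegaB v N"
  proof (cases "omegaB v N = Q")
    case False
    then have sep: "\<exists>c. c \<noteq> 0 \<and> omegaB v N (pfr f) (cst c) \<and> Q (cst c) (pfr f)" if "f \<noteq> 0" for f
      using le that unfolding vle_def by blast
    \<comment> \<open>for a ball B(b0, gamma0) of N missing r, Q(x - r) = v(b0 - r), since v(b0 - r) < gamma0
        \<le> omegaB(x - b0) \<le> Q(x - b0)\<close>
    have "\<exists>c. c \<noteq> 0 \<and> q.Qeq (lin r) (cst c) \<and> wnest v N [:-r, 1:] = v c" for r
    proof -
      obtain b0 \<gamma>0 where B: "(b0, \<gamma>0) \<in> N" "r \<notin> cball v b0 \<gamma>0"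
        using nest_avoids[OF N, of r] by auto
      have rb: "b0 - r \<noteq> 0" "v (b0 - r) < \<gamma>0"
        using B(2) v_diff_commute[of r b0] unfolding cball_def by auto
      have "\<gamma>0 \<le> wnest v N [:-b0, 1:]"
        using wnest_ge[OF N B(1), of "[:-b0, 1:]"] wval_linear[OF nest_radius_valgroup[OF N B(1)], of b0 b0]
        by simp
      moreover obtain c where c: "c \<noteq> 0" "omegaB v N (pfr [:-b0, 1:]) (cst c)" "Q (cst c) (lin b0)"
        using sep[of "[:-b0, 1:]"] unfolding lin_def by auto
      ultimately have "v (b0 - r) < v c"
        using omegaB_pfr_cst_iff[OF N _ c(1)] rb by fastforce
      then have "q.Qlt (cst (b0 - r)) (lin b0)"
        unfolding q.Qlt_def using c q.Q_trans q.Q_cst_iff rb by (meson not_le)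
      then have "q.Qeq (lin r) (cst (b0 - r))"
        using q.Qeq_add_dominant' lin_eq_add_cst[of r b0] by simp
      then show ?thesis
        using rb wnest_linear_outside[OF N B] by blast
    qed
    then show ?thesis using q.eq_omegaB_if_lin_det[OF N] by blast
  qed simp
qed

end

section \<open>Maximal valuation classes\<close>

locale val_class_lin_unbounded = val_class v Q
  for v :: "'k::field \<Rightarrow> 'g::linordered_ab_group_add" and Q +
  assumes lin_unbounded: "\<forall>b. \<exists>b'. Qlt (lin b) (lin b')"
begin

lemma lin_equiv_cst: "\<exists>c. c \<noteq> 0 \<and> Qeq (lin b) (cst c)"
proof -
  obtain b' where lt: "Qlt (lin b) (lin b')"
    using lin_unbounded by blast
  then have "b' - b \<noteq> 0"
    using Q_refl unfolding Qlt_def by auto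
  moreover have "Qeq (lin b) (cst (b' - b))"
    using Qeq_diff_dominant[OF lt] lin_diff[of b b'] Qeq_sym by metis
  ultimately show ?thesis by blast
qed

text \<open>Q(x - b), read off in Gamma through a constant equivalent to x - b.\<close>
definition rad :: "'k \<Rightarrow> 'g" where
  "rad b = v (SOME c. c \<noteq> 0 \<and> Qeq (lin b) (cst c))"

lemma rad_witness: obtains c where "c \<noteq> 0" "Qeq (lin b) (cst c)" "rad b = v c"
  using someI_ex[OF lin_equiv_cst[of b]] unfolding rad_def by blast

lemma Q_cst_lin_iff:
  assumes "e \<noteq> 0"
  shows "Q (cst e) (lin b) \<longleftrightarrow> v e \<le> rad b"
proof -
  obtain c where "c \<noteq> 0" "Qeq (lin b) (cst c)" "rad b = v c" by (rule rad_witness)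
  then show ?thesis using Q_cong[OF Qeq_refl] Q_cst_iff assms by simp
qed

lemma Q_lin_lin_iff: "Q (lin b) (lin b') \<longleftrightarrow> rad b \<le> rad b'"
proof -
  obtain c where "c \<noteq> 0" "Qeq (lin b) (cst c)" "rad b = v c" by (rule rad_witness)
  moreover obtain c' where "c' \<noteq> 0" "Qeq (lin b') (cst c')" "rad b' = v c'" by (rule rad_witness)
  ultimately show ?thesis using Q_cong Q_cst_iff by simp
qed

lemma rad_unbounded: "\<exists>b'. rad b < rad b'"
proof -
  obtain b' where "Qlt (lin b) (lin b')" using lin_unbounded by blast
  then have "\<not> rad b' \<le> rad b" unfolding Qlt_def Q_lin_lin_iff .
  then show ?thesis by (auto simp: not_le)
qed

definition centre_at :: "'g \<Rightarrow> 'k" where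
  "centre_at g = (SOME b. rad b = g)"

lemma rad_centre_at: "g \<in> range rad \<Longrightarrow> rad (centre_at g) = g"
  unfolding centre_at_def by (rule someI_ex) auto

lemma cball_centre_at:
  assumes g: "g \<in> range rad"
  shows "cball v (centre_at g) g = {c. g \<le> rad c}"
proof (intro set_eqI iffI)
  let ?b = "centre_at g"
  obtain e where e: "e \<noteq> 0" "rad ?b = v e"
    using rad_witness by metis
  have ge: "g = v e" using e rad_centre_at[OF g] by simp
  have Qb: "Q (cst e) (lin ?b)"
    using Q_cst_lin_iff[OF e(1)] e by simp
  fix c
  show "c \<in> {c. g \<le> rad c}" if "c \<in> cball v ?b g"
  proof (cases "c = ?b")
    case False
    then have "Q (cst e) (cst (?b - c))"
      using that Q_cst_iff e(1) ge v_diff_commute[of c ?b] unfolding cball_def by simp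
    then have "Q (cst e) (lin c)"
      using Q_add Qb lin_eq_add_cst[of c ?b] by simp
    then show ?thesis using Q_cst_lin_iff[OF e(1)] ge by simp
  qed (use rad_centre_at[OF g] in simp)
  show "c \<in> cball v ?b g" if "c \<in> {c. g \<le> rad c}"
  proof (cases "c = ?b")
    case False
    have "Q (cst e) (lin c)"
      using that Q_cst_lin_iff[OF e(1)] ge by simp
    then have "Q (cst e) (cst (?b - c))"
      using Q_diff[of "cst e" "lin c" "lin ?b"] Qb lin_diff[of c ?b] by simp
    then show ?thesis
      using Q_cst_iff e(1) False ge v_diff_commute[of c ?b] unfolding cball_def by simp
  qed (simp add: cball_def)
qed

definition rad_nest :: "('k \<times> 'g) set" where
  "rad_nest = (\<lambda>g. (centre_at g, g)) ` range rad"

lemma rad_nest_strict_mono: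
  assumes "g < h" "g \<in> range rad" "h \<in> range rad"
  shows "cball v (centre_at h) h \<subset> cball v (centre_at g) g"
proof -
  have "{c. h \<le> rad c} \<subseteq> {c. g \<le> rad c}"
    using assms(1) by auto
  moreover have "centre_at g \<in> {c. g \<le> rad c} - {c. h \<le> rad c}"
    using rad_centre_at[OF assms(2)] assms(1) by auto
  ultimately show ?thesis
    unfolding cball_centre_at[OF assms(2)] cball_centre_at[OF assms(3)] by blast
qed

lemma rad_valgroup: "rad b \<in> \<Gamma>"
  by (metis rad_witness valgroupI)

lemma rad_nest_is_nest: "is_nest v rad_nest"
  unfolding is_nest_def
proof (intro conjI)
  show "rad_nest \<noteq> {}" unfolding rad_nest_def by simp
  show "\<forall>(a, \<gamma>)\<in>rad_nest. \<gamma> \<in> \<Gamma>"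
    unfolding rad_nest_def using rad_valgroup by auto
  show "\<forall>p\<in>rad_nest. \<forall>q\<in>rad_nest. p \<noteq> q \<longrightarrow> cball v (fst p) (snd p) \<subset> cball v (fst q) (snd q) \<or>
      cball v (fst q) (snd q) \<subset> cball v (fst p) (snd p)"
  proof (intro ballI impI)
    fix p q assume "p \<in> rad_nest" "q \<in> rad_nest" "p \<noteq> q"
    moreover obtain g h where "p = (centre_at g, g)" "q = (centre_at h, h)" "g \<in> range rad" "h \<in> range rad"
      using \<open>p \<in> rad_nest\<close> \<open>q \<in> rad_nest\<close> unfolding rad_nest_def by blast
    ultimately show "cball v (fst p) (snd p) \<subset> cball v (fst q) (snd q) \<or>
        cball v (fst q) (snd q) \<subset> cball v (fst p) (snd p)"
      using rad_nest_strict_mono[of g h] rad_nest_strict_mono[of h g] by (cases g h rule: linorder_cases) auto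
  qed
  show "(\<Inter>p\<in>rad_nest. cball v (fst p) (snd p)) = {}"
  proof (rule ccontr)
    assume "(\<Inter>p\<in>rad_nest. cball v (fst p) (snd p)) \<noteq> {}"
    then obtain c where c: "\<forall>p\<in>rad_nest. c \<in> cball v (fst p) (snd p)" by blast
    obtain b' where "rad c < rad b'" using rad_unbounded by blast
    moreover have "(centre_at (rad b'), rad b') \<in> rad_nest"
      unfolding rad_nest_def by blast
    then have "c \<in> cball v (centre_at (rad b')) (rad b')"
      using c by fastforce
    ultimately show False
      using cball_centre_at[of "rad b'"] by auto
  qed
qed

theorem eq_omegaB_rad_nest: "Q = omegaB v rad_nest"
proof (rule eq_omegaB_if_lin_det[OF rad_nest_is_nest])
  fix r
  obtain b' where lt: "rad r < rad b'" using rad_unbounded by blast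
  let ?b = "centre_at (rad b')"
  have B: "(?b, rad b') \<in> rad_nest" unfolding rad_nest_def by blast
  have out: "r \<notin> cball v ?b (rad b')" using cball_centre_at[of "rad b'"] lt by auto
  then have ne: "?b - r \<noteq> 0" using cball_centre by fastforce
  have "Qlt (lin r) (lin ?b)"
    unfolding Qlt_def using Q_lin_lin_iff rad_centre_at[of "rad b'"] lt by simp
  then have "Qeq (cst (?b - r)) (lin r)"
    using Qeq_diff_dominant lin_diff[of r ?b] by metis
  then have "Qeq (lin r) (cst (?b - r))" by (rule Qeq_sym)
  then show "\<exists>c. c \<noteq> 0 \<and> Qeq (lin r) (cst c) \<and> wnest v rad_nest [:-r, 1:] = v c"
    using ne wnest_linear_outside[OF rad_nest_is_nest B out] by blast
qed

end

context alg_closed_valued_field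
begin

theorem maximal_cases:
  assumes M: "is_maximal v P"
  shows "(\<exists>N. is_nest v N \<and> P = omegaB v N) \<or> (\<exists>a. P = omega v a (qc_inftym \<Gamma>))"
proof -
  have P: "is_val_class v P" and maxP: "\<And>Q. is_val_class v Q \<Longrightarrow> vle v P Q \<Longrightarrow> Q = P"
    using M unfolding is_maximal_def by blast+
  interpret p: val_class v P by (rule val_classI[OF P])
  show ?thesis
  proof (cases "\<exists>b. \<forall>c. c \<noteq> 0 \<longrightarrow> \<not> P (lin b) (cst c)")
    case True
    then show ?thesis using p.eq_omega_inftym_if_lin_above by blast
  next
    case False
    then have bounded: "\<exists>c. c \<noteq> 0 \<and> P (lin b) (cst c)" for b by blast
    \<comment> \<open>if Q(x - b) were maximal among the Q(x - r), b would be a centre and Q < omega_{b,\<infinity>-}\<close>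
    have "\<forall>b. \<exists>b'. p.Qlt (lin b) (lin b')"
    proof (rule ccontr)
      assume "\<not> ?thesis"
      then obtain b where "\<forall>r. P (lin r) (lin b)" unfolding p.Qlt_def by blast
      then have "P = omega v b (p.lin_cut b)"
        using p.is_centre_imp_eq_omega p.is_centre_if_lin_max by blast
      then have "omega v b (qc_inftym \<Gamma>) = P"
        using maxP omega_val_class[OF qc_inftym_Qcuts] omega_vle_omega_inftym[OF p.lin_cut_Qcuts] by metis
      then show False using bounded not_omega_inftym_lin_cst by metis
    qed
    then interpret val_class_lin_unbounded v P
      by unfold_locales
    show ?thesis using eq_omegaB_rad_nest rad_nest_is_nest by blast
  qed
qed

end

theorem mainTheorem10:
  fixes v :: "'k::field \<Rightarrow> 'g::linordered_ab_group_add"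
  assumes "alg_closed_field TYPE('k)"
    and "is_valuation v"
  shows
    "((\<forall>a b. omega v a (qc_minf (valgroup v)) = omega v b (qc_minf (valgroup v))) \<and>
     (\<forall>a P. is_val_class v P \<longrightarrow> vle v (omega v a (qc_minf (valgroup v))) P)) \<and>
    ((\<forall>a. is_maximal v (omega v a (qc_inftym (valgroup v)))) \<and>
     {P. is_maximal v P} =
       {omegaB v N | N. is_nest v N} \<union> {omega v a (qc_inftym (valgroup v)) | a. True} \<and>
     {omegaB v N | N. is_nest v N} \<inter> {omega v a (qc_inftym (valgroup v)) | a. True} = {}) \<and>
    (\<forall>a. {Q. is_val_class v Q \<and> vle v (omega v a (qc_minf (valgroup v))) Q \<and>
              vle v Q (omega v a (qc_inftym (valgroup v)))}
         = {omega v a \<delta> | \<delta>. \<delta> \<in> Qcuts (valgroup v)})"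
proof -
  interpret alg_closed_valued_field v
    by unfold_locales (fact assms)+
  have maximal: "{P. is_maximal v P} =
      {omegaB v N | N. is_nest v N} \<union> {omega v a (qc_inftym \<Gamma>) | a. True}"
    using maximal_cases omegaB_maximal omega_inftym_maximal by blast
  have disjoint: "{omegaB v N | N. is_nest v N} \<inter> {omega v a (qc_inftym \<Gamma>) | a. True} = {}"
    using omegaB_ne_omega_inftym by blast
  show ?thesis
    using omega_minf_indep omega_minf_vle omega_inftym_maximal maximal disjoint omega_interval by blast
qed

end
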